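(* Assume Assumption A, that $N<\infty$, and that $\sum_{n\in\mathbb{N}}d(e^n)^{N-2}=\infty$. Let $(\sigma_i)_{i\in\mathbb{N}}$ be i.i.d. copies of $\sigma_0$, $m_i:=\max_{j\le i}\sigma_j$, $S_i:=\sum_{j\le i}\sigma_j$. Then for each sufficiently small $\varepsilon>0$, almost-surely \[ \frac{S_i}{m_i}>N-1-\varepsilon \] for infinitely many $i$.
   Context: $\sigma_0$ is a strictly positive random variable under $\mathbf{P}$ and $L(u):=1/\mathbf{P}(\sigma_0>u)$ satisfies $\lim_{u\to\infty}L(uv)/L(u)=1$ for all $v>0$. Assumption A: $L$ is continuous, and there exist functions $g,k$ with $g(u)\to0$ as $u\to\infty$, $g$ eventually monotone decreasing, such that $\lim_{u\to\infty}\big(L(uv)/L(u)-1\big)/g(u)=k(v)$ for every $v>0$, where there exists $v$ with $k(v)\neq0$ and $k(uv)\ne k(u)$ for all $u>0$. $d(u):=g(L^{-1}(u))$ with $L^{-1}$ the right-continuous inverse of $L$, and \[N:=\min\Big\{\ell\in\{2,3,\dots\}: \sum_{n\in\mathbb{N}}\big(d(e^n)\log n\big)^{\ell-1}<\infty\Big\},\] with $N=\infty$ if no such $\ell$ exists. *)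

theory Defs
  imports "HOL-Probability.Probability"
begin

definition tailL :: "'a measure \<Rightarrow> ('a \<Rightarrow> real) \<Rightarrow> real \<Rightarrow> real" where
  "tailL M X u = 1 / measure M {x \<in> space M. u < X x}"

definition rc_inv :: "(real \<Rightarrow> real) \<Rightarrow> real \<Rightarrow> real" where
  "rc_inv L y = Inf {x. y < L x}"

definition Nidx :: "(real \<Rightarrow> real) \<Rightarrow> nat" where
  "Nidx d = (LEAST l. 2 \<le> l \<and> summable (\<lambda>n::nat. (d (exp (real n)) * ln (real n)) ^ (l - 1)))"

end

theory Submission
  imports Defs
begin

text \<open>Put \<open>K = N - 1\<close> and \<open>v = 1 - \<epsilon> / K\<close>, so that \<open>K v = N - 1 - \<epsilon>\<close>.  Assumption A
  forces \<open>k < 0\<close> on \<open>(0, 1)\<close>, hence \<open>P(v u < \<sigma>\<^sub>0 \<le> u) \<ge> \<alpha> g(u) / L(u)\<close> for large \<open>u\<close>.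
  Split the indices into blocks \<open>[R\<^sup>n\<^sup>-\<^sup>1, R\<^sup>n)\<close> of size \<open>m\<^sub>n\<close>.  Let \<open>E\<^sub>n\<close> be the event that
  exactly \<open>K\<close> variables of block \<open>n\<close> fall into one band \<open>(v c, c]\<close> of the grid \<open>c = v\<^sup>-\<^sup>j\<close>
  lying between \<open>L\<^sup>-\<^sup>1(2 m\<^sub>n)\<close> and \<open>L\<^sup>-\<^sup>1(8 m\<^sub>n)\<close>, all other variables of the block lying below
  the band.  The band probabilities add up to order \<open>1 / m\<^sub>n\<close>, so \<open>P(E\<^sub>n)\<close> is of order
  \<open>g(L\<^sup>-\<^sup>1(8 m\<^sub>n))\<^sup>K\<^sup>-\<^sup>1\<close>, which is not summable by the divergence hypothesis.  If moreover no
  earlier variable exceeds \<open>L\<^sup>-\<^sup>1(2 m\<^sub>n)\<close> (event \<open>G\<^sub>n\<close>, failing with probability at most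
  \<open>1 / (2 (R - 1))\<close>), then at the end of the block the sum exceeds \<open>K v c\<close> while the maximum
  is at most \<open>c\<close>.  As \<open>E\<^sub>n\<close> depends only on block \<open>n\<close>, the probability that \<open>E\<^sub>n \<inter> G\<^sub>n\<close> fails
  for all large \<open>n\<close> is at most \<open>1 / (2 (R - 1))\<close>; letting \<open>R \<rightarrow> \<infinity>\<close> gives the claim.\<close>

lemma tendsto_at_top_rescale:
  fixes f :: "real \<Rightarrow> 'b::topological_space"
  assumes "0 < c" "(f \<longlongrightarrow> l) at_top"
  shows "((\<lambda>t. f (t * c)) \<longlongrightarrow> l) at_top"
  using assms(2) filterlim_at_top_mult_tendsto_pos[OF tendsto_const assms(1) filterlim_ident]
  by (rule filterlim_compose)

lemma inverse_diff_ge_of_le_mult: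
  fixes a b z :: real
  assumes "0 < a" "0 < b" "0 \<le> z" "b \<le> a * (1 - z)"
  shows "z / a \<le> 1 / b - 1 / a"
proof -
  have z1: "0 < 1 - z" using assms by (metis less_le_trans zero_less_mult_pos)
  have "z \<le> 1 / (1 - z) - 1" using assms(3) z1 by (simp add: field_simps)
  then have "z / a \<le> 1 / (a * (1 - z)) - 1 / a"
    using assms(1) z1 by (simp add: field_simps divide_right_mono)
  also have "1 / (a * (1 - z)) \<le> 1 / b" using assms z1 by (intro divide_left_mono) auto
  finally show ?thesis by simp
qed

lemma Nidx_ge_2:
  assumes "\<exists>l\<ge>2. summable (\<lambda>n::nat. (d (exp (real n)) * ln (real n)) ^ (l - 1))"
  shows "2 \<le> Nidx d"
  unfolding Nidx_def using assms by (rule LeastI2_ex) simp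

lemma sum_lessThan_mult_div: "(\<Sum>m<n * C. f (m div C)) = real C * (\<Sum>i<n. f i :: real)"
proof -
  have "(\<Sum>m<n * C. f (m div C)) = (\<Sum>i<n. \<Sum>m\<in>{i * C..<i * C + C}. f (m div C))"
    by (rule sum.nat_group[symmetric])
  also have "\<dots> = (\<Sum>i<n. \<Sum>m\<in>{i * C..<i * C + C}. f i)"
  proof (intro sum.cong refl)
    fix i m assume "m \<in> {i * C..<i * C + C}"
    then have "m div C = i" by (intro div_nat_eqI) (auto simp: mult.commute)
    then show "f (m div C) = f i" by simp
  qed
  finally show ?thesis by (simp add: sum_distrib_left)
qed

text \<open>A weak form of Cauchy condensation: for nonnegative nonincreasing \<open>h\<close>, summability of
  \<open>h (C n)\<close> implies that of \<open>h\<close>, since \<open>h m \<le> h (C \<lfloor>m / C\<rfloor>)\<close>.\<close>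
lemma summable_of_summable_mult_index:
  fixes h :: "nat \<Rightarrow> real"
  assumes C: "1 \<le> C" and nonneg: "\<And>n. 0 \<le> h n" and antimono: "\<And>n p. n \<le> p \<Longrightarrow> h p \<le> h n"
    and summable: "summable (\<lambda>n. h (C * n))"
  shows "summable h"
proof -
  define w where "w m = h (C * (m div C))" for m
  have "summable w"
  proof (rule summableI_nonneg_bounded)
    show "0 \<le> w n" for n using nonneg by (simp add: w_def)
    fix n
    have "(\<Sum>i<n. w i) \<le> (\<Sum>i<n * C. w i)"
    proof (rule sum_mono2)
      show "{..<n} \<subseteq> {..<n * C}" using mult_le_mono2[OF C, of n] by auto
    qed (auto simp: w_def nonneg)
    also have "\<dots> = real C * (\<Sum>i<n. h (C * i))" unfolding w_def by (rule sum_lessThan_mult_div)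
    also have "\<dots> \<le> real C * (\<Sum>i. h (C * i))"
      by (intro mult_left_mono sum_le_suminf summable) (auto simp: nonneg)
    finally show "(\<Sum>i<n. w i) \<le> real C * (\<Sum>i. h (C * i))" .
  qed
  moreover have "h m \<le> w m" for m unfolding w_def by (rule antimono) (simp add: mult.commute)
  ultimately show ?thesis using nonneg by (intro summable_comparison_test[of h w]) auto
qed

lemma summable_of_summable_mult_index_eventually:
  fixes h :: "nat \<Rightarrow> real"
  assumes C: "1 \<le> C" and nonneg: "\<And>n. n \<ge> N \<Longrightarrow> 0 \<le> h n"
    and antimono: "\<And>n p. N \<le> n \<Longrightarrow> n \<le> p \<Longrightarrow> h p \<le> h n"
    and summable: "summable (\<lambda>n. h (C * n))"
  shows "summable h"
proof -
  have "summable (\<lambda>n. h (C * (n + N)))"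
    by (rule summable_iff_shift[THEN iffD2, OF summable])
  then have shifted: "summable (\<lambda>n. h (C * n + C * N))" by (simp add: distrib_left)
  have CN: "N \<le> C * N" using C by simp
  have "summable (\<lambda>n. h (n + C * N))"
  proof (rule summable_of_summable_mult_index[OF C])
    show "0 \<le> h (n + C * N)" for n using CN by (intro nonneg) linarith
    show "h (p + C * N) \<le> h (n + C * N)" if "n \<le> p" for n p using CN that by (intro antimono) linarith+
  qed (use shifted in simp)
  then show ?thesis by (rule summable_iff_shift[THEN iffD1])
qed

lemma prod_one_minus_le_exp:
  fixes p :: "'b \<Rightarrow> real"
  assumes "\<And>i. i \<in> S \<Longrightarrow> p i \<le> 1"
  shows "(\<Prod>i\<in>S. 1 - p i) \<le> exp (- (\<Sum>i\<in>S. p i))"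
proof (cases "finite S")
  case True
  have "(\<Prod>i\<in>S. 1 - p i) \<le> (\<Prod>i\<in>S. exp (- p i))"
  proof (rule prod_mono)
    fix i assume "i \<in> S"
    then show "0 \<le> 1 - p i \<and> 1 - p i \<le> exp (- p i)" using assms exp_ge_add_one_self[of "- p i"] by simp
  qed
  also have "\<dots> = exp (- (\<Sum>i\<in>S. p i))" using exp_sum[OF True, of "\<lambda>i. - p i"] by (simp add: sum_negf)
  finally show ?thesis .
qed simp

lemma (in prob_space) AE_of_small_covers:
  assumes "\<And>e. 0 < e \<Longrightarrow> \<exists>W\<in>sets M. prob W \<le> e \<and> (\<forall>\<omega>\<in>space M. \<not> P \<omega> \<longrightarrow> \<omega> \<in> W)"
  shows "AE \<omega> in M. P \<omega>"
proof -
  obtain W where W: "\<And>n. W n \<in> sets M" "\<And>n. prob (W n) \<le> 1 / Suc n"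
    "\<And>n. \<forall>\<omega>\<in>space M. \<not> P \<omega> \<longrightarrow> \<omega> \<in> W n"
    using assms[of "1 / Suc _"] by (metis of_nat_0_less_iff zero_less_Suc zero_less_divide_1_iff)
  have sets: "(\<Inter>n. W n) \<in> sets M" using W(1) by auto
  have "prob (\<Inter>n. W n) \<le> 1 / Suc n" for n
    using W(2)[of n] W(1) by (meson INT_lower UNIV_I finite_measure_mono order.trans)
  moreover have "(\<lambda>n. 1 / real (Suc n)) \<longlonglongrightarrow> 0"
    using LIMSEQ_inverse_real_of_nat by (simp add: inverse_eq_divide)
  ultimately have "prob (\<Inter>n. W n) \<le> 0" by (intro LIMSEQ_le_const[of "\<lambda>n. 1 / real (Suc n)"]) auto
  then have "emeasure M (\<Inter>n. W n) = 0" by (simp add: emeasure_eq_measure antisym)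
  then show ?thesis using sets W(3) by (intro AE_I[of _ _ "\<Inter>n. W n"]) auto
qed

definition in_band_exactly :: "nat set \<Rightarrow> nat \<Rightarrow> real \<Rightarrow> real \<Rightarrow> (nat \<Rightarrow> real) \<Rightarrow> bool" where
  "in_band_exactly B K a b f \<longleftrightarrow>
     (\<exists>S\<subseteq>B. card S = K \<and> (\<forall>i\<in>S. a < f i \<and> f i \<le> b) \<and> (\<forall>i\<in>B - S. f i \<le> a))"

lemma in_band_exactly_restrict: "B \<subseteq> A \<Longrightarrow> in_band_exactly B K a b (\<lambda>i\<in>A. f i) = in_band_exactly B K a b f"
  unfolding in_band_exactly_def by (intro ex_cong conj_cong ball_cong refl) auto

lemma pred_in_band_exactly:
  assumes "B \<subseteq> A" "finite B"
  shows "Measurable.pred (PiM A (\<lambda>_. borel)) (in_band_exactly B K a b)"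
proof -
  have "in_band_exactly B K a b =
      (\<lambda>f. \<exists>S\<in>{S. S \<subseteq> B \<and> card S = K}. (\<forall>i\<in>S. a < f i \<and> f i \<le> b) \<and> (\<forall>i\<in>B - S. f i \<le> a))"
    by (auto simp: fun_eq_iff in_band_exactly_def)
  also have "Measurable.pred (PiM A (\<lambda>_. borel)) \<dots>"
  proof (rule pred_intros_finite(4))
    fix S assume S: "S \<in> {S. S \<subseteq> B \<and> card S = K}"
    then have "finite S" "S \<subseteq> A" using assms finite_subset by auto
    then show "Measurable.pred (PiM A (\<lambda>_. borel)) (\<lambda>f. (\<forall>i\<in>S. a < f i \<and> f i \<le> b) \<and> (\<forall>i\<in>B - S. f i \<le> a))"
      using assms by (intro pred_intros_logic(3) pred_intros_finite(3)) auto
  qed (use assms in simp)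
  finally show ?thesis .
qed

locale iid_slowly_varying =
  fixes M :: "'a measure" and \<sigma> :: "nat \<Rightarrow> 'a \<Rightarrow> real" and g k :: "real \<Rightarrow> real"
  assumes P: "prob_space M"
    and rv: "\<And>i. \<sigma> i \<in> borel_measurable M"
    and indep: "prob_space.indep_vars M (\<lambda>_. borel) \<sigma> UNIV"
    and ident: "\<And>i. distr M borel (\<sigma> i) = distr M borel (\<sigma> 0)"
    and pos: "AE x in M. 0 < \<sigma> 0 x"
    and slow: "\<And>v. 0 < v \<Longrightarrow> ((\<lambda>u. tailL M (\<sigma> 0) (u * v) / tailL M (\<sigma> 0) u) \<longlongrightarrow> 1) at_top"
    and Lcont: "continuous_on UNIV (tailL M (\<sigma> 0))"
    and g_lim: "(g \<longlongrightarrow> 0) at_top"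
    and g_dec: "\<exists>u0. \<forall>x y. u0 \<le> x \<longrightarrow> x \<le> y \<longrightarrow> g y \<le> g x"
    and k_lim: "\<And>v. 0 < v \<Longrightarrow>
       ((\<lambda>u. (tailL M (\<sigma> 0) (u * v) / tailL M (\<sigma> 0) u - 1) / g u) \<longlongrightarrow> k v) at_top"
    and k_nontriv: "\<exists>v>0. k v \<noteq> 0 \<and> (\<forall>u>0. k (u * v) \<noteq> k u)"
begin

sublocale prob_space M by (rule P)

definition tail :: "real \<Rightarrow> real" where "tail u = prob {x\<in>space M. u < \<sigma> 0 x}"

abbreviation L where "L \<equiv> tailL M (\<sigma> 0)"

lemma L_eq_inverse_tail: "L u = 1 / tail u" by (simp add: tailL_def tail_def)

lemma sets_sigma_gt[measurable]: "{x\<in>space M. u < \<sigma> i x} \<in> sets M"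
  using rv[of i] by measurable

lemma tail_antimono: "u \<le> w \<Longrightarrow> tail w \<le> tail u"
  unfolding tail_def by (intro finite_measure_mono) auto

lemma tail_le_1: "tail u \<le> 1" unfolding tail_def by simp

lemma tail_nonneg: "0 \<le> tail u" unfolding tail_def by simp

lemma tail_eq_1: assumes "u \<le> 0" shows "tail u = 1"
proof -
  have "AE x in M. u < \<sigma> 0 x" using pos by eventually_elim (use assms in auto)
  then show ?thesis unfolding tail_def by (subst prob_Collect_eq_1) auto
qed

text \<open>Positivity of the tail is where slow variation enters: \<open>L (u * 1) / L u \<longrightarrow> 1\<close> forces
  \<open>L u \<noteq> 0\<close>, i.e.\ \<open>tail u \<noteq> 0\<close>, for large \<open>u\<close> (recall \<open>1 / 0 = 0\<close>).\<close>
lemma tail_pos: "0 < tail u"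
proof -
  have "\<forall>\<^sub>F w in at_top. L (w * 1) / L w > 0"
    using order_tendstoD(1)[OF slow[of 1], of 0] by simp
  then obtain w0 where w0: "\<And>w. w \<ge> w0 \<Longrightarrow> L (w * 1) / L w > 0"
    by (auto simp: eventually_at_top_linorder)
  have "tail (max u w0) \<noteq> 0" using w0[of "max u w0"] by (auto simp: L_eq_inverse_tail)
  then have "0 < tail (max u w0)" using tail_nonneg by (simp add: order_less_le)
  also have "tail (max u w0) \<le> tail u" by (rule tail_antimono) simp
  finally show ?thesis .
qed

lemma tail_tendsto_0: "(tail \<longlongrightarrow> 0) at_top"
proof -
  let ?A = "\<lambda>n::nat. {x\<in>space M. real n < \<sigma> 0 x}"
  have "(\<lambda>n. measure M (?A n)) \<longlonglongrightarrow> measure M (\<Inter>n. ?A n)"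
    by (rule finite_Lim_measure_decseq) (auto simp: decseq_def)
  moreover have "(\<Inter>n. ?A n) = {}"
  proof safe
    fix x assume "x \<in> (\<Inter>n. ?A n)"
    then have "real (nat \<lceil>\<sigma> 0 x\<rceil>) < \<sigma> 0 x" by blast
    then show "x \<in> {}" by linarith
  qed
  ultimately have lim: "(\<lambda>n. tail (real n)) \<longlonglongrightarrow> 0" by (simp add: tail_def)
  show ?thesis
  proof (rule order_tendstoI)
    fix a :: real assume "a < 0"
    then show "\<forall>\<^sub>F x in at_top. a < tail x" using tail_nonneg by (intro always_eventually) (meson less_le_trans)
  next
    fix a :: real assume "0 < a"
    with lim obtain n where "tail (real n) < a"
      by (metis (no_types, lifting) eventually_sequentially order.refl order_tendstoD(2))
    then show "\<forall>\<^sub>F x in at_top. tail x < a"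
      unfolding eventually_at_top_linorder by (intro exI[of _ "real n"]) (auto intro: le_less_trans tail_antimono)
  qed
qed

lemma L_mono: "u \<le> w \<Longrightarrow> L u \<le> L w"
  unfolding L_eq_inverse_tail using tail_pos tail_antimono by (simp add: frac_le)

lemma L_ge_1: "1 \<le> L u" unfolding L_eq_inverse_tail using tail_pos tail_le_1 by simp

lemma L_pos: "0 < L u" using L_ge_1[of u] by simp

lemma L_eq_1: "u \<le> 0 \<Longrightarrow> L u = 1" unfolding L_eq_inverse_tail using tail_eq_1 by simp

lemma tail_eq_inverse_L: "tail u = 1 / L u" using L_eq_inverse_tail[of u] tail_pos[of u] by simp

lemma L_unbounded: "\<exists>x. y < L x"
proof -
  have "\<forall>\<^sub>F x in at_top. tail x < 1 / max y 1" using tail_tendsto_0 by (rule order_tendstoD) simp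
  then obtain x where "tail x < 1 / max y 1" by (auto simp: eventually_at_top_linorder)
  then have "tail x * max y 1 < 1" using pos_less_divide_eq[of "max y 1"] by simp
  then have "max y 1 < 1 / tail x" using pos_less_divide_eq[OF tail_pos[of x]] by (simp add: mult.commute)
  then show ?thesis by (intro exI[of _ x]) (auto simp: L_eq_inverse_tail)
qed

lemma bdd_below_L_gt: assumes "1 \<le> y" shows "bdd_below {x. y < L x}"
proof (rule bdd_belowI)
  fix x assume "x \<in> {x. y < L x}"
  then show "0 \<le> x" using L_eq_1[of x] assms by force
qed

text \<open>Continuity of \<open>L\<close> makes the right-continuous inverse an honest right inverse.\<close>
lemma L_rc_inv: assumes "1 \<le> y" shows "L (rc_inv L y) = y"
proof -
  define S where "S = {x. y < L x}"
  have ne: "S \<noteq> {}" using L_unbounded by (auto simp: S_def)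
  have bdd: "bdd_below S" unfolding S_def using assms by (rule bdd_below_L_gt)
  define s where "s = Inf S"
  have isc: "isCont L x" for x using Lcont by (simp add: continuous_on_eq_continuous_at)
  have cont: "(\<lambda>n. L (s + h n)) \<longlonglongrightarrow> L s" if "h \<longlonglongrightarrow> 0" for h
    using isCont_tendsto_compose[OF isc tendsto_add[OF tendsto_const that, of s]] by simp
  have inv: "(\<lambda>n. 1 / real (Suc n)) \<longlonglongrightarrow> 0"
    using LIMSEQ_inverse_real_of_nat by (simp add: inverse_eq_divide)
  have inv': "(\<lambda>n. - (1 / real (Suc n))) \<longlonglongrightarrow> 0" using tendsto_minus[OF inv] by simp
  have "L s \<le> y"
  proof (rule LIMSEQ_le_const2[OF cont[OF inv']], intro exI allI impI)
    fix n
    have "s - 1 / real (Suc n) \<notin> S"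
      using cInf_lower[OF _ bdd, of "s - 1 / real (Suc n)"] by (auto simp: s_def)
    then show "L (s + - (1 / real (Suc n))) \<le> y" by (simp add: S_def)
  qed
  moreover have "y \<le> L s"
  proof (rule LIMSEQ_le_const[OF cont[OF inv]], intro exI allI impI)
    fix n
    have "Inf S < s + 1 / real (Suc n)" by (simp add: s_def)
    then obtain x where "x \<in> S" "x < s + 1 / real (Suc n)" using cInf_lessD[OF ne] by blast
    then show "y \<le> L (s + 1 / real (Suc n))" using L_mono[of x "s + 1 / real (Suc n)"] by (simp add: S_def)
  qed
  ultimately show ?thesis by (simp add: rc_inv_def s_def S_def)
qed

lemma rc_inv_mono: assumes "1 \<le> y1" "y1 \<le> y2" shows "rc_inv L y1 \<le> rc_inv L y2"
  unfolding rc_inv_def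
  using assms L_unbounded[of y2] bdd_below_L_gt[of y1] by (intro cInf_superset_mono) auto

lemma rc_inv_pos: assumes "1 < y" shows "0 < rc_inv L y"
  using L_rc_inv[of y] assms L_eq_1[of "rc_inv L y"] by (cases "rc_inv L y \<le> 0") auto

lemma filterlim_rc_inv_at_top: "filterlim (rc_inv L) at_top at_top"
  unfolding filterlim_at_top eventually_at_top_linorder
proof (intro allI exI[of _ "max 1 (L _ + 1)"] allI impI)
  fix B y assume y: "max 1 (L B + 1) \<le> y"
  show "B \<le> rc_inv L y"
  proof (rule ccontr)
    assume "\<not> B \<le> rc_inv L y"
    then have "L (rc_inv L y) \<le> L B" by (intro L_mono) simp
    then show False using L_rc_inv[of y] y by simp
  qed
qed

definition rel_increment :: "real \<Rightarrow> real \<Rightarrow> real" where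
  "rel_increment v u = (L (u * v) / L u - 1) / g u"

lemma rel_increment_tendsto: "0 < v \<Longrightarrow> (rel_increment v \<longlongrightarrow> k v) at_top"
  using k_lim[of v] unfolding rel_increment_def .

lemma k_unique: assumes "0 < v" "(rel_increment v \<longlongrightarrow> l) at_top" shows "k v = l"
  using tendsto_unique[OF trivial_limit_at_top_linorder rel_increment_tendsto[OF assms(1)] assms(2)] .

text \<open>If \<open>g\<close> vanished eventually, every \<open>rel_increment v\<close> would eventually be \<open>0 / 0 = 0\<close>,
  forcing \<open>k = 0\<close> on \<open>(0, \<infinity>)\<close> against the nontriviality of \<open>k\<close>.\<close>
lemma g_eventually_pos_antimono: "\<exists>U. \<forall>x\<ge>U. 0 < g x \<and> (\<forall>y\<ge>x. g y \<le> g x)"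
proof -
  obtain u0 where u0: "\<And>x y. u0 \<le> x \<Longrightarrow> x \<le> y \<Longrightarrow> g y \<le> g x" using g_dec by blast
  have nonneg: "0 \<le> g x" if "u0 \<le> x" for x
  proof (rule tendsto_le[OF trivial_limit_at_top_linorder tendsto_const g_lim])
    show "\<forall>\<^sub>F y in at_top. g y \<le> g x"
      unfolding eventually_at_top_linorder using u0 that by blast
  qed
  have "0 < g x" if x: "u0 \<le> x" for x
  proof (rule ccontr)
    assume "\<not> 0 < g x"
    then have "g y = 0" if "x \<le> y" for y
      using u0[OF x that] nonneg[of x] nonneg[of y] x that by simp
    then have "k v = 0" if "0 < v" for v
      using that by (intro k_unique tendsto_eventually) (auto simp: rel_increment_def eventually_at_top_linorder)
    then show False using k_nontriv by auto
  qed
  then show ?thesis using u0 by blast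
qed

lemma k_1: "k 1 = 0"
proof -
  have "rel_increment 1 = (\<lambda>_. 0)" using L_pos by (simp add: rel_increment_def fun_eq_iff less_imp_neq[symmetric])
  then show ?thesis by (intro k_unique) simp_all
qed

lemma k_mono: assumes "0 < w1" "w1 \<le> w2" shows "k w1 \<le> k w2"
proof (rule tendsto_le[OF trivial_limit_at_top_linorder rel_increment_tendsto rel_increment_tendsto])
  obtain U where U: "\<And>x. x \<ge> U \<Longrightarrow> 0 < g x" using g_eventually_pos_antimono by blast
  show "\<forall>\<^sub>F u in at_top. rel_increment w1 u \<le> rel_increment w2 u"
    unfolding eventually_at_top_linorder
  proof (intro exI[of _ "max U 0"] allI impI)
    fix u assume u: "max U 0 \<le> u"
    have "L (u * w1) \<le> L (u * w2)" using u assms by (intro L_mono mult_left_mono) auto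
    then show "rel_increment w1 u \<le> rel_increment w2 u"
      unfolding rel_increment_def using U[of u] u L_pos[of u] by (simp add: divide_right_mono)
  qed
qed (use assms in auto)

text \<open>The cocycle identity \<open>L (t u w) / L t = (L (t u w) / L (t u)) (L (t u) / L t)\<close> gives
  \<open>rel_increment (u w) t = \<rho> t \<alpha> t + \<beta> t + g (t u) \<alpha> t \<beta> t\<close>, where \<open>\<alpha>, \<beta>\<close> are the increments
  at \<open>(w, t u)\<close> and \<open>(u, t)\<close> and \<open>\<rho> t = g (t u) / g t \<in> [0, 1]\<close>.\<close>
lemma k_mult_eq: assumes u: "1 \<le> u" and w: "0 < w" and kw: "k w = 0" shows "k (u * w) = k u"
proof -
  obtain U where U: "\<And>x. x \<ge> U \<Longrightarrow> 0 < g x \<and> (\<forall>y\<ge>x. g y \<le> g x)" using g_eventually_pos_antimono by blast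
  define \<alpha> where "\<alpha> t = rel_increment w (t * u)" for t
  define \<beta> where "\<beta> t = rel_increment u t" for t
  define \<rho> where "\<rho> t = g (t * u) / g t" for t
  have a0: "(\<alpha> \<longlongrightarrow> 0) at_top"
    unfolding \<alpha>_def using tendsto_at_top_rescale[OF _ rel_increment_tendsto[OF w], of u] u kw by simp
  have b: "(\<beta> \<longlongrightarrow> k u) at_top" unfolding \<beta>_def using rel_increment_tendsto[of u] u by simp
  have g0: "((\<lambda>t. g (t * u)) \<longlongrightarrow> 0) at_top" using tendsto_at_top_rescale[OF _ g_lim, of u] u by simp
  have gt: "0 < g t" "0 < g (t * u)" "g (t * u) \<le> g t" if "max U 0 \<le> t" for t
    using U[of t] U[of "t * u"] that u mult_le_cancel_left1[of t u] by auto
  have "0 \<le> \<rho> t \<and> \<rho> t \<le> 1" if "max U 0 \<le> t" for t using gt[OF that] by (simp add: \<rho>_def)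
  then have "\<forall>\<^sub>F t in at_top. norm (\<rho> t * \<alpha> t) \<le> norm (\<alpha> t) * 1"
    unfolding eventually_at_top_linorder by (intro exI[of _ "max U 0"]) (auto simp: abs_mult mult_left_le_one_le)
  then have ra: "((\<lambda>t. \<rho> t * \<alpha> t) \<longlongrightarrow> 0) at_top" by (rule tendsto_0_le[OF a0])
  have "((\<lambda>t. \<rho> t * \<alpha> t + \<beta> t + g (t * u) * \<alpha> t * \<beta> t) \<longlongrightarrow> 0 + k u + 0 * 0 * k u) at_top"
    by (intro tendsto_add tendsto_mult ra b g0 a0)
  moreover have "\<forall>\<^sub>F t in at_top. rel_increment (u * w) t = \<rho> t * \<alpha> t + \<beta> t + g (t * u) * \<alpha> t * \<beta> t"
    unfolding eventually_at_top_linorder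
  proof (intro exI[of _ "max U 0"] allI impI)
    fix t assume t: "max U 0 \<le> t"
    have "L (t * (u * w)) / L t = (L (t * u * w) / L (t * u)) * (L (t * u) / L t)"
      using L_pos[of "t * u"] by (simp add: mult.assoc)
    also have "\<dots> = (1 + g (t * u) * \<alpha> t) * (1 + g t * \<beta> t)"
      using gt[OF t] by (simp add: \<alpha>_def \<beta>_def rel_increment_def)
    finally show "rel_increment (u * w) t = \<rho> t * \<alpha> t + \<beta> t + g (t * u) * \<alpha> t * \<beta> t"
      unfolding rel_increment_def \<rho>_def using gt[OF t] by (simp add: field_simps)
  qed
  ultimately show ?thesis using u w by (intro k_unique) (auto simp: tendsto_cong)
qed

text \<open>Zeros of \<open>k\<close> below \<open>1\<close> spread upwards: \<open>k = 0\<close> on \<open>[v, 1]\<close> by monotonicity, and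
  \<open>k_mult_eq\<close> extends this from \<open>[v, v\<^sup>-\<^sup>n]\<close> to \<open>[v, v\<^sup>-\<^sup>n\<^sup>-\<^sup>1]\<close>.\<close>
lemma k_eq_0_above:
  assumes v: "0 < v" "v < 1" and kv: "k v = 0" and z: "v \<le> z"
  shows "k z = 0"
proof -
  have base: "k z = 0" if "v \<le> z" "z \<le> 1" for z
    using k_mono[of v z] k_mono[of z 1] k_1 kv that v by simp
  have power: "k z = 0" if "v \<le> z" "z \<le> (1/v)^n" for n z
    using that
  proof (induction n arbitrary: z)
    case 0 then show ?case using base by simp
  next
    case (Suc n)
    show ?case
    proof (cases "z \<le> (1/v)^n")
      case True then show ?thesis using Suc by blast
    next
      case False
      have p1: "1 \<le> (1/v)^n" using v by (simp add: one_le_power)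
      then have z1: "1 \<le> z" using False by simp
      define w where "w = (1/v)^n / z"
      have w: "v \<le> w" "w \<le> 1"
        using False Suc.prems z1 v by (auto simp: w_def field_simps)
      have "k z = k (z * w)" using k_mult_eq[OF z1, of w] base[OF w] w v by simp
      also have "z * w = (1/v)^n" using z1 by (simp add: w_def)
      also have "k ((1/v)^n) = 0" using Suc.IH[of "(1/v)^n"] p1 v by simp
      finally show ?thesis .
    qed
  qed
  obtain n where "z < (1/v)^n" using real_arch_pow[of "1/v" z] v by auto
  then show ?thesis using power[of z n] z by simp
qed

text \<open>Otherwise \<open>k = 0\<close> on \<open>[v, \<infinity>)\<close>, contradicting the nontriviality witness \<open>w\<close>, as
  \<open>k (1 / w * w) \<noteq> k (1 / w)\<close>.\<close>
lemma k_neg: assumes v: "0 < v" "v < 1" shows "k v < 0"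
proof (rule ccontr)
  assume "\<not> k v < 0"
  moreover have "k v \<le> 0" using k_mono[of v 1] k_1 v by simp
  ultimately have all: "k z = 0" if "v \<le> z" for z using k_eq_0_above[OF v _ that] by simp
  obtain w where w: "0 < w" "k w \<noteq> 0" "\<And>u. 0 < u \<Longrightarrow> k (u * w) \<noteq> k u" using k_nontriv by blast
  show False
  proof (cases "v \<le> w")
    case True then show False using all w by simp
  next
    case False
    then have "v * w \<le> 1" using w(1) v by (intro mult_le_one) auto
    then have "v \<le> 1 / w" using w(1) by (simp add: pos_le_divide_eq)
    then show False using w(3)[of "1 / w"] all[of 1] all[of "1 / w"] w(1) v by simp
  qed
qed

lemma tail_increment_ge:
  assumes v: "0 < v" "v < 1"
  shows "\<exists>U. \<forall>u\<ge>U. 0 < g u \<and> (\<forall>w\<ge>u. g w \<le> g u) \<and> - k v / 2 * g u / L u \<le> tail (u * v) - tail u"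
proof -
  obtain U1 where U1: "\<And>u. u \<ge> U1 \<Longrightarrow> 0 < g u \<and> (\<forall>w\<ge>u. g w \<le> g u)"
    using g_eventually_pos_antimono by blast
  have "\<forall>\<^sub>F u in at_top. rel_increment v u < k v / 2"
    using order_tendstoD(2)[OF rel_increment_tendsto[OF v(1)], of "k v / 2"] k_neg[OF v] by simp
  then obtain U2 where U2: "\<And>u. u \<ge> U2 \<Longrightarrow> rel_increment v u < k v / 2"
    by (auto simp: eventually_at_top_linorder)
  have "- k v / 2 * g u / L u \<le> tail (u * v) - tail u" if u: "max U1 U2 \<le> u" for u
  proof -
    have gu: "0 < g u" using U1 u by auto
    have "L (u * v) / L u - 1 < k v / 2 * g u"
      using U2[of u] u gu by (simp add: rel_increment_def pos_divide_less_eq)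
    then have "L (u * v) \<le> L u * (1 - - k v / 2 * g u)"
      using L_pos[of u] by (simp add: divide_less_eq algebra_simps)
    moreover have "0 \<le> - k v / 2 * g u" using k_neg[OF v] gu by (simp add: mult_nonpos_nonneg)
    ultimately have "- k v / 2 * g u / L u \<le> 1 / L (u * v) - 1 / L u"
      by (intro inverse_diff_ge_of_le_mult L_pos)
    then show ?thesis by (simp add: tail_eq_inverse_L)
  qed
  then show ?thesis using U1 by (intro exI[of _ "max U1 U2"]) auto
qed

lemma g_rc_inv_eventually_antimono:
  obtains Y where "\<And>z z'. Y \<le> z \<Longrightarrow> z \<le> z' \<Longrightarrow> 0 \<le> g (rc_inv L z') \<and> g (rc_inv L z') \<le> g (rc_inv L z)"
proof -
  obtain U where U: "\<And>u. U \<le> u \<Longrightarrow> 0 < g u \<and> (\<forall>w\<ge>u. g w \<le> g u)"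
    using g_eventually_pos_antimono by blast
  obtain Y where Y: "\<And>z. Y \<le> z \<Longrightarrow> U \<le> rc_inv L z"
    using filterlim_rc_inv_at_top unfolding filterlim_at_top eventually_at_top_linorder by blast
  show ?thesis
  proof (rule that[of "max 1 Y"])
    fix z z' assume "max 1 Y \<le> z" "z \<le> z'"
    then show "0 \<le> g (rc_inv L z') \<and> g (rc_inv L z') \<le> g (rc_inv L z)"
      using U[OF Y, of z] Y[of z] U[OF Y, of z'] rc_inv_mono[of z z'] by auto
  qed
qed

lemma summable_g_rc_inv_exp_of_mult_index:
  assumes C: "1 \<le> C" and summable: "summable (\<lambda>n. g (rc_inv L (exp (real (C * n)))) ^ p)"
  shows "summable (\<lambda>n. g (rc_inv L (exp (real n))) ^ p)"
proof -
  obtain Y where Y: "\<And>z z'. Y \<le> z \<Longrightarrow> z \<le> z' \<Longrightarrow> 0 \<le> g (rc_inv L z') \<and> g (rc_inv L z') \<le> g (rc_inv L z)"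
    using g_rc_inv_eventually_antimono by blast
  define N0 where "N0 = nat \<lceil>Y\<rceil>"
  have Y_le: "Y \<le> exp (real n)" if "N0 \<le> n" for n
  proof -
    have "Y \<le> real N0" unfolding N0_def by (rule real_nat_ceiling_ge)
    also have "\<dots> \<le> exp (real n)" using that exp_ge_add_one_self[of "real n"] by linarith
    finally show ?thesis .
  qed
  have h: "0 \<le> g (rc_inv L (exp (real p'))) ^ p"
    "g (rc_inv L (exp (real p'))) ^ p \<le> g (rc_inv L (exp (real n))) ^ p" if "N0 \<le> n" "n \<le> p'" for n p'
    using Y[OF Y_le[OF that(1)], of "exp (real p')"] that by (auto intro: power_mono)
  show ?thesis
    by (rule summable_of_summable_mult_index_eventually[OF C _ _ summable]) (use h(1)[OF _ order.refl] h(2) in auto)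
qed

lemma prob_sigma_gt: "prob {x\<in>space M. a < \<sigma> i x} = tail a"
proof -
  have "prob {x\<in>space M. a < \<sigma> i x} = measure (distr M borel (\<sigma> i)) {a<..}"
    using rv by (subst measure_distr) (auto intro: arg_cong[where f=prob])
  also have "\<dots> = prob {x\<in>space M. a < \<sigma> 0 x}"
    using rv by (subst ident, subst measure_distr) (auto intro: arg_cong[where f=prob])
  finally show ?thesis by (simp add: tail_def)
qed

lemma prob_sigma_le: "prob (\<sigma> i -` {..a} \<inter> space M) = 1 - tail a"
proof -
  have "\<sigma> i -` {..a} \<inter> space M = space M - {x\<in>space M. a < \<sigma> i x}" by auto
  then show ?thesis using prob_compl[of "{x\<in>space M. a < \<sigma> i x}"] prob_sigma_gt by simp
qed

lemma AE_sigma_pos: "AE \<omega> in M. \<forall>i. 0 < \<sigma> i \<omega>"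
proof (subst AE_all_countable, intro allI)
  fix i
  have "\<sigma> i -` {..0} \<inter> space M \<in> sets M" using rv[of i] by measurable
  moreover have "prob (\<sigma> i -` {..0} \<inter> space M) = 0" using prob_sigma_le[of i 0] tail_eq_1[of 0] by simp
  ultimately have "AE \<omega> in M. \<omega> \<notin> \<sigma> i -` {..0} \<inter> space M" by (simp add: prob_eq_0)
  then show "AE \<omega> in M. 0 < \<sigma> i \<omega>" using AE_space by eventually_elim auto
qed

lemma prob_sigma_in_band: assumes "a \<le> b" shows "prob (\<sigma> i -` {a<..b} \<inter> space M) = tail a - tail b"
proof -
  have "\<sigma> i -` {a<..b} \<inter> space M = {x\<in>space M. a < \<sigma> i x} - {x\<in>space M. b < \<sigma> i x}" by auto
  moreover have "{x\<in>space M. b < \<sigma> i x} \<subseteq> {x\<in>space M. a < \<sigma> i x}" using assms by auto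
  ultimately show ?thesis by (simp add: finite_measure_Diff prob_sigma_gt)
qed

lemma prob_some_sigma_gt: "prob {x\<in>space M. \<exists>i<T. a < \<sigma> i x} \<le> real T * tail a"
proof -
  have "{x\<in>space M. \<exists>i<T. a < \<sigma> i x} = (\<Union>i<T. {x\<in>space M. a < \<sigma> i x})" by auto
  also have "prob \<dots> \<le> (\<Sum>i<T. prob {x\<in>space M. a < \<sigma> i x})" by (rule measure_UNION_le) auto
  finally show ?thesis by (simp add: prob_sigma_gt)
qed

lemma sets_pred_sigma:
  assumes "Measurable.pred (PiM A (\<lambda>_. borel)) P"
  shows "{\<omega>\<in>space M. P (\<lambda>i\<in>A. \<sigma> i \<omega>)} \<in> sets M"
  using measurable_compose[OF measurable_restrict[OF rv] assms] by (simp add: pred_def)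

definition band_event :: "nat set \<Rightarrow> nat \<Rightarrow> real \<Rightarrow> real \<Rightarrow> 'a set" where
  "band_event B K a b = {\<omega>\<in>space M. in_band_exactly B K a b (\<lambda>i. \<sigma> i \<omega>)}"

lemma sets_band_event: "finite B \<Longrightarrow> band_event B K a b \<in> sets M"
  using sets_pred_sigma[OF pred_in_band_exactly[of B B K a b]]
  by (simp add: band_event_def in_band_exactly_restrict)

lemma band_event_eq_UN:
  assumes "B \<noteq> {}"
  shows "band_event B K a b = (\<Union>S\<in>{S. S \<subseteq> B \<and> card S = K}.
           \<Inter>i\<in>B. \<sigma> i -` (if i \<in> S then {a<..b} else {..a}) \<inter> space M)"
proof (intro set_eqI iffI)
  fix \<omega> assume "\<omega> \<in> (\<Union>S\<in>{S. S \<subseteq> B \<and> card S = K}. \<Inter>i\<in>B. \<sigma> i -` (if i \<in> S then {a<..b} else {..a}) \<inter> space M)"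
  then obtain S where S: "S \<subseteq> B" "card S = K"
    and "\<omega> \<in> (\<Inter>i\<in>B. \<sigma> i -` (if i \<in> S then {a<..b} else {..a}) \<inter> space M)" by blast
  then have sp: "\<omega> \<in> space M" and mem: "\<And>i. i \<in> B \<Longrightarrow> \<sigma> i \<omega> \<in> (if i \<in> S then {a<..b} else {..a})"
    using assms by blast+
  have "\<forall>i\<in>S. a < \<sigma> i \<omega> \<and> \<sigma> i \<omega> \<le> b" using mem S(1) by force
  moreover have "\<forall>i\<in>B - S. \<sigma> i \<omega> \<le> a" using mem by force
  ultimately show "\<omega> \<in> band_event B K a b"
    using S sp unfolding band_event_def in_band_exactly_def by blast
qed (auto simp: band_event_def in_band_exactly_def)

text \<open>Each piece of the union has the product probability by independence.\<close>
lemma prob_band_event: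
  assumes B: "finite B" "B \<noteq> {}" and ab: "a \<le> b"
  shows "prob (band_event B K a b) = real (card B choose K) * (tail a - tail b) ^ K * (1 - tail a) ^ (card B - K)"
proof -
  define Sub where "Sub = {S. S \<subseteq> B \<and> card S = K}"
  define I where "I S i = (if i \<in> S then {a<..b} else {..a})" for S and i :: nat
  define C where "C S = (\<Inter>i\<in>B. \<sigma> i -` I S i \<inter> space M)" for S
  have band_eq: "band_event B K a b = (\<Union>S\<in>Sub. C S)"
    using band_event_eq_UN[OF B(2)] by (simp add: Sub_def C_def I_def)
  have disj: "disjoint_family_on C Sub"
  proof (unfold disjoint_family_on_def, intro ballI impI)
    fix S1 S2 assume S: "S1 \<in> Sub" "S2 \<in> Sub" "S1 \<noteq> S2"
    then obtain i where i: "i \<in> B" "(i \<in> S1) \<noteq> (i \<in> S2)" unfolding Sub_def by blast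
    have "\<sigma> i \<omega> \<in> I S1 i \<inter> I S2 i" if "\<omega> \<in> C S1 \<inter> C S2" for \<omega> using i(1) that unfolding C_def by blast
    moreover have "I S1 i \<inter> I S2 i = {}" using i(2) by (auto simp: I_def)
    ultimately show "C S1 \<inter> C S2 = {}" by blast
  qed
  have prob_C: "prob (C S) = (tail a - tail b) ^ K * (1 - tail a) ^ (card B - K)" if "S \<in> Sub" for S
  proof -
    have SB: "S \<subseteq> B" "card S = K" using that by (auto simp: Sub_def)
    have "prob (C S) = (\<Prod>i\<in>B. prob (\<sigma> i -` I S i \<inter> space M))"
      unfolding C_def by (rule indep_varsD[OF indep B(2) B(1)]) (auto simp: I_def)
    also have "\<dots> = (\<Prod>i\<in>B. if i \<in> S then tail a - tail b else 1 - tail a)"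
      by (intro prod.cong refl) (auto simp: I_def prob_sigma_in_band[OF ab] prob_sigma_le)
    also have "\<dots> = (tail a - tail b) ^ K * (1 - tail a) ^ (card B - K)"
      using SB B(1) by (simp add: prod.If_cases Int_absorb1 Diff_eq[symmetric] card_Diff_subset finite_subset)
    finally show ?thesis .
  qed
  have sets_C: "C S \<in> sets M" for S
    unfolding C_def using B rv by (intro sets.finite_INT) (auto simp: I_def)
  have "prob (band_event B K a b) = (\<Sum>S\<in>Sub. prob (C S))"
    unfolding band_eq using B disj sets_C by (intro finite_measure_finite_Union) (auto simp: Sub_def)
  also have "\<dots> = real (card Sub) * ((tail a - tail b) ^ K * (1 - tail a) ^ (card B - K))"
    using prob_C by simp
  finally show ?thesis using n_subsets[OF B(1)] by (simp add: Sub_def)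
qed

text \<open>Band events for consecutive bands of a nondecreasing grid are disjoint when \<open>K \<ge> 1\<close>: the
  \<open>K\<close> band entries of the higher band exceed every entry allowed by the lower one.\<close>
lemma prob_UN_band_event:
  assumes B: "finite B" and K: "1 \<le> K" and c: "mono (c :: nat \<Rightarrow> real)" and J: "finite J"
  shows "prob (\<Union>j\<in>J. band_event B K (c (j - 1)) (c j)) = (\<Sum>j\<in>J. prob (band_event B K (c (j - 1)) (c j)))"
proof (rule finite_measure_finite_Union[OF J])
  show "(\<lambda>j. band_event B K (c (j - 1)) (c j)) ` J \<subseteq> sets M" using sets_band_event[OF B] by auto
  have disj: "band_event B K (c (j1 - 1)) (c j1) \<inter> band_event B K (c (j2 - 1)) (c j2) = {}"
    if "j1 < j2" for j1 j2
  proof (rule ccontr)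
    assume "\<not> ?thesis"
    then obtain \<omega> S1 S2 where S1: "S1 \<subseteq> B" "\<forall>i\<in>S1. \<sigma> i \<omega> \<le> c j1" "\<forall>i\<in>B - S1. \<sigma> i \<omega> \<le> c (j1 - 1)"
      and S2: "S2 \<subseteq> B" "card S2 = K" "\<forall>i\<in>S2. c (j2 - 1) < \<sigma> i \<omega>"
      unfolding band_event_def in_band_exactly_def by blast
    from S2 K obtain i where i: "i \<in> S2" by fastforce
    have "c (j1 - 1) \<le> c j1" "c j1 \<le> c (j2 - 1)" using c that by (auto intro: monoD)
    then show False using S1 S2 i by (cases "i \<in> S1") force+
  qed
  show "disjoint_family_on (\<lambda>j. band_event B K (c (j - 1)) (c j)) J"
    unfolding disjoint_family_on_def by (metis disj Int_commute linorder_neqE_nat)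
qed

lemma prob_indep_restrict:
  assumes AB: "A \<inter> B = {}"
    and P: "Measurable.pred (PiM A (\<lambda>_. borel)) P" and Q: "Measurable.pred (PiM B (\<lambda>_. borel)) Q"
  shows "prob {\<omega>\<in>space M. P (\<lambda>i\<in>A. \<sigma> i \<omega>) \<and> Q (\<lambda>i\<in>B. \<sigma> i \<omega>)}
       = prob {\<omega>\<in>space M. P (\<lambda>i\<in>A. \<sigma> i \<omega>)} * prob {\<omega>\<in>space M. Q (\<lambda>i\<in>B. \<sigma> i \<omega>)}"
proof -
  have "indep_var (PiM A (\<lambda>_. borel)) (\<lambda>\<omega>. \<lambda>i\<in>A. \<sigma> i \<omega>) (PiM B (\<lambda>_. borel)) (\<lambda>\<omega>. \<lambda>i\<in>B. \<sigma> i \<omega>)"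
    by (rule indep_var_restrict[OF indep AB]) auto
  from indep_varD[OF this P[unfolded pred_def] Q[unfolded pred_def]] show ?thesis
    by (simp add: space_PiM vimage_def Int_def conj_commute)
qed

end

locale blocks = iid_slowly_varying +
  fixes K :: nat and v :: real and R :: nat
  assumes K_ge_1: "1 \<le> K" and v_pos: "0 < v" and v_less_1: "v < 1" and R_ge_3: "3 \<le> R"
begin

definition c :: "nat \<Rightarrow> real" where "c j = (1 / v) ^ j"
definition m :: "nat \<Rightarrow> nat" where "m n = R ^ n - R ^ (n - 1)"
definition x :: "nat \<Rightarrow> real" where "x n = rc_inv L (2 * real (m n))"
definition y :: "nat \<Rightarrow> real" where "y n = rc_inv L (8 * real (m n))"
definition lam :: real where "lam = ln (1 / v)"
definition a :: "nat \<Rightarrow> nat" where "a n = nat \<lceil>ln (x n) / lam\<rceil>"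
definition b :: "nat \<Rightarrow> nat" where "b n = nat \<lfloor>ln (y n) / lam\<rfloor>"
definition J :: "nat \<Rightarrow> nat set" where "J n = {Suc (a n) .. b n}"
definition block :: "nat \<Rightarrow> nat set" where "block n = {R ^ (n - 1) ..< R ^ n}"
definition PE :: "nat \<Rightarrow> (nat \<Rightarrow> real) \<Rightarrow> bool" where
  "PE n f \<longleftrightarrow> (\<exists>j\<in>J n. in_band_exactly (block n) K (c (j - 1)) (c j) f)"
definition PG :: "nat \<Rightarrow> (nat \<Rightarrow> real) \<Rightarrow> bool" where "PG n f \<longleftrightarrow> (\<forall>i<R ^ (n - 1). f i \<le> x n)"
definition E :: "nat \<Rightarrow> 'a set" where "E n = {\<omega>\<in>space M. PE n (\<lambda>i. \<sigma> i \<omega>)}"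
definition G :: "nat \<Rightarrow> 'a set" where "G n = {\<omega>\<in>space M. PG n (\<lambda>i. \<sigma> i \<omega>)}"
definition alpha :: real where "alpha = - k v / 2"

lemma lam_pos: "0 < lam" using v_pos v_less_1 by (simp add: lam_def)

lemma alpha_pos: "0 < alpha" using k_neg[OF v_pos v_less_1] by (simp add: alpha_def)

lemma c_eq_exp: "c j = exp (real j * lam)"
  using v_pos by (simp add: c_def lam_def exp_of_nat_mult)

lemma c_pos: "0 < c j" by (simp add: c_eq_exp)

lemma mono_c: "mono c"
  unfolding mono_def c_eq_exp using lam_pos by (auto intro: mult_right_mono)

lemma c_diff_1: "1 \<le> j \<Longrightarrow> c (j - 1) = v * c j"
  using v_pos by (cases j) (auto simp: c_def)

lemma c_le_iff: assumes "0 < z" shows "c j \<le> z \<longleftrightarrow> real j \<le> ln z / lam"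
proof -
  have "c j \<le> z \<longleftrightarrow> ln (c j) \<le> ln z" using assms c_pos by simp
  then show ?thesis using lam_pos by (simp add: c_eq_exp pos_le_divide_eq)
qed

lemma c_ge_iff: assumes "0 < z" shows "z \<le> c j \<longleftrightarrow> ln z / lam \<le> real j"
proof -
  have "z \<le> c j \<longleftrightarrow> ln z \<le> ln (c j)" using assms c_pos by simp
  then show ?thesis using lam_pos by (simp add: c_eq_exp pos_divide_le_eq)
qed

lemma m_eq: "1 \<le> n \<Longrightarrow> real (m n) = real R ^ (n - 1) * (real R - 1)"
  using R_ge_3 by (cases n) (auto simp: m_def algebra_simps of_nat_diff)

lemma m_ge_pow: "1 \<le> n \<Longrightarrow> 2 * real R ^ (n - 1) \<le> real (m n)"
  using R_ge_3 by (simp add: m_eq mult.commute mult_left_mono)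

lemma m_ge: assumes "1 \<le> n" shows "2 \<le> real (m n)"
proof -
  have "1 \<le> real R ^ (n - 1)" using R_ge_3 by simp
  then show ?thesis using m_ge_pow[OF assms] by linarith
qed

lemma L_x: assumes "1 \<le> n" shows "L (x n) = 2 * real (m n)"
  unfolding x_def using m_ge[OF assms] by (intro L_rc_inv) simp

lemma L_y: assumes "1 \<le> n" shows "L (y n) = 8 * real (m n)"
  unfolding y_def using m_ge[OF assms] by (intro L_rc_inv) simp

lemma x_le_y: assumes "1 \<le> n" shows "x n \<le> y n"
  unfolding x_def y_def using m_ge[OF assms] by (intro rc_inv_mono) auto

lemma filterlim_m: "filterlim (\<lambda>n. real (m n)) at_top sequentially"
proof (rule filterlim_at_top_mono)
  show "\<forall>\<^sub>F n in sequentially. real R ^ (n - 1) \<le> real (m n)"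
    using m_ge_pow by (intro eventually_sequentiallyI[of 1]) (smt (verit) zero_le_power of_nat_0_le_iff)
  have "real n \<le> real R ^ n" for n
    using less_exp[of n] power_mono[of 2 R n] R_ge_3 by (simp del: of_nat_power add: of_nat_power[symmetric])
  then have "filterlim (\<lambda>n. real R ^ n) at_top sequentially"
    by (intro filterlim_at_top_mono[OF filterlim_real_sequentially always_eventually]) auto
  then show "filterlim (\<lambda>n. real R ^ (n - 1)) at_top sequentially"
    by (rule filterlim_compose) (rule filterlim_minus_const_nat_at_top)
qed

lemma filterlim_x: "filterlim x at_top sequentially"
  unfolding x_def
  by (rule filterlim_compose[OF filterlim_rc_inv_at_top])
     (simp add: filterlim_tendsto_pos_mult_at_top[OF tendsto_const _ filterlim_m])

lemma filterlim_y: "filterlim y at_top sequentially"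
  unfolding y_def
  by (rule filterlim_compose[OF filterlim_rc_inv_at_top])
     (simp add: filterlim_tendsto_pos_mult_at_top[OF tendsto_const _ filterlim_m])

definition thr :: real where
  "thr = (SOME U. \<forall>u\<ge>U. 0 < g u \<and> (\<forall>w\<ge>u. g w \<le> g u) \<and> alpha * g u / L u \<le> tail (u * v) - tail u)"

lemma thr:
  assumes "thr \<le> u"
  shows "0 < g u" "\<And>w. u \<le> w \<Longrightarrow> g w \<le> g u" "alpha * g u / L u \<le> tail (u * v) - tail u"
proof -
  have "\<exists>U. \<forall>u\<ge>U. 0 < g u \<and> (\<forall>w\<ge>u. g w \<le> g u) \<and> alpha * g u / L u \<le> tail (u * v) - tail u"
    using tail_increment_ge[OF v_pos v_less_1] by (simp add: alpha_def)
  then have "\<forall>u\<ge>thr. 0 < g u \<and> (\<forall>w\<ge>u. g w \<le> g u) \<and> alpha * g u / L u \<le> tail (u * v) - tail u"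
    unfolding thr_def by (rule someI_ex)
  then have "0 < g u \<and> (\<forall>w\<ge>u. g w \<le> g u) \<and> alpha * g u / L u \<le> tail (u * v) - tail u"
    using assms by blast
  then show "0 < g u" "\<And>w. u \<le> w \<Longrightarrow> g w \<le> g u" "alpha * g u / L u \<le> tail (u * v) - tail u"
    by auto
qed

definition good :: "nat \<Rightarrow> bool" where
  "good n \<longleftrightarrow> 1 \<le> n \<and> 2 * K \<le> m n \<and> max 1 thr \<le> x n
     \<and> L (x n * (1 / v ^ 2)) \<le> 2 * L (x n) \<and> 3 / 4 * L (y n) \<le> L (y n * v)"

lemma eventually_good: "eventually good sequentially"
proof -
  have "\<forall>\<^sub>F n in sequentially. real (2 * K) \<le> real (m n)"
    using filterlim_m unfolding filterlim_at_top by blast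
  moreover have "\<forall>\<^sub>F n in sequentially. max 1 thr \<le> x n"
    using filterlim_x unfolding filterlim_at_top by blast
  moreover have "((\<lambda>n. L (x n * (1 / v ^ 2)) / L (x n)) \<longlongrightarrow> 1) sequentially"
    using filterlim_compose[OF slow filterlim_x, of "1 / v ^ 2"] v_pos by simp
  then have "\<forall>\<^sub>F n in sequentially. L (x n * (1 / v ^ 2)) / L (x n) < 2"
    by (rule order_tendstoD) simp
  moreover have "((\<lambda>n. L (y n * v) / L (y n)) \<longlongrightarrow> 1) sequentially"
    using filterlim_compose[OF slow filterlim_y, of v] v_pos by simp
  then have "\<forall>\<^sub>F n in sequentially. 3 / 4 < L (y n * v) / L (y n)"
    by (rule order_tendstoD) simp
  ultimately show ?thesis using eventually_ge_at_top[of 1]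
  proof eventually_elim
    case (elim n)
    have "L (x n * (1 / v ^ 2)) \<le> 2 * L (x n)" using elim(3) L_pos[of "x n"] by (simp add: divide_less_eq)
    moreover have "3 / 4 * L (y n) \<le> L (y n * v)" using elim(4) L_pos[of "y n"] by (simp add: less_divide_eq)
    moreover have "2 * K \<le> m n" using elim(1) by linarith
    ultimately show ?case using elim(2,5) by (simp add: good_def)
  qed
qed

lemma good_x_ge_1: "good n \<Longrightarrow> 1 \<le> x n" by (simp add: good_def)

lemma x_pos: assumes "1 \<le> n" shows "0 < x n"
  unfolding x_def using m_ge[OF assms] by (intro rc_inv_pos) simp

lemma x_le_c_a: assumes "1 \<le> n" shows "x n \<le> c (a n)"
  using x_pos[OF assms] by (simp add: c_ge_iff a_def real_nat_ceiling_ge)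

lemma c_a_lt: assumes "1 \<le> x n" shows "c (a n) < x n / v"
proof -
  have "0 \<le> ln (x n) / lam" using assms lam_pos by simp
  then have "real (a n) - 1 < ln (x n) / lam" by (simp add: a_def) linarith
  then have "(real (a n) - 1) * lam < ln (x n)" using lam_pos by (simp add: pos_less_divide_eq)
  then have "real (a n) * lam < ln (x n) + lam" by (simp add: algebra_simps)
  then have "c (a n) < exp (ln (x n) + lam)" by (simp add: c_eq_exp)
  also have "\<dots> = x n / v" using assms v_pos by (simp add: exp_add lam_def)
  finally show ?thesis .
qed

lemma c_b_le: assumes "1 \<le> y n" shows "c (b n) \<le> y n"
  using assms lam_pos by (simp add: c_le_iff b_def)

lemma c_b_gt: assumes "1 \<le> y n" shows "v * y n < c (b n)"
proof -
  have "0 \<le> ln (y n) / lam" using assms lam_pos by simp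
  then have "ln (y n) / lam - 1 < real (b n)" by (simp add: b_def)
  then have "ln (y n) - lam < real (b n) * lam" using lam_pos by (simp add: pos_divide_less_eq algebra_simps)
  then have "exp (ln (y n) - lam) < c (b n)" by (simp add: c_eq_exp)
  moreover have "exp (ln (y n) - lam) = v * y n" using assms v_pos by (simp add: exp_diff lam_def)
  ultimately show ?thesis by simp
qed

lemma good_y_ge_1: "good n \<Longrightarrow> 1 \<le> y n"
  using good_x_ge_1 x_le_y by (force simp: good_def)

text \<open>The band window is nonempty: \<open>c (a n + 1) < x n / v\<^sup>2\<close>, where \<open>L\<close> is at most \<open>4 m n < L (y n)\<close>.\<close>
lemma Suc_a_le_b: assumes "good n" shows "Suc (a n) \<le> b n"
proof -
  have x1: "1 \<le> x n" and n: "1 \<le> n" using assms by (auto simp: good_def)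
  have "c (Suc (a n)) = c (a n) / v" by (simp add: c_def)
  also have "\<dots> < x n / v / v" using c_a_lt[OF x1] v_pos by (rule divide_strict_right_mono)
  also have "\<dots> = x n * (1 / v ^ 2)" by (simp add: power2_eq_square)
  finally have "L (c (Suc (a n))) \<le> L (x n * (1 / v ^ 2))" by (intro L_mono) simp
  also have "\<dots> \<le> 4 * real (m n)" using assms L_x[OF n] by (simp add: good_def)
  also have "\<dots> < L (y n)" using L_y[OF n] m_ge[OF n] by simp
  finally have L_lt: "L (c (Suc (a n))) < L (y n)" .
  have "c (Suc (a n)) \<le> y n"
  proof (rule ccontr)
    assume "\<not> c (Suc (a n)) \<le> y n"
    then have "L (y n) \<le> L (c (Suc (a n)))" by (intro L_mono) simp
    then show False using L_lt by simp
  qed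
  then have "real (Suc (a n)) \<le> ln (y n) / lam" using good_y_ge_1[OF assms] c_le_iff by simp
  then show ?thesis by (simp add: b_def le_nat_floor)
qed

lemma x_le_band: assumes "1 \<le> n" "j \<in> J n" shows "x n \<le> c (j - 1)"
proof -
  have "c (a n) \<le> c (j - 1)" using assms(2) by (intro monoD[OF mono_c]) (auto simp: J_def)
  then show ?thesis using x_le_c_a[OF assms(1)] by simp
qed

lemma band_in_window:
  assumes "good n" "j \<in> J n"
  shows "x n \<le> c (j - 1)" "c j \<le> y n" "c (j - 1) = v * c j"
proof -
  have j: "Suc (a n) \<le> j" "j \<le> b n" using assms(2) by (auto simp: J_def)
  show "x n \<le> c (j - 1)" using assms by (intro x_le_band) (simp_all add: good_def)
  show "c j \<le> y n"
    using c_b_le[OF good_y_ge_1[OF assms(1)]] monoD[OF mono_c, of j "b n"] j by simp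
  show "c (j - 1) = v * c j" using c_diff_1 j by simp
qed

lemma g_y_pos: assumes "good n" shows "0 < g (y n)"
  using assms x_le_y[of n] by (intro thr(1)) (auto simp: good_def)

lemma tail_band_ge:
  assumes n: "good n" and j: "j \<in> J n"
  shows "alpha * g (y n) / (8 * real (m n)) \<le> tail (c (j - 1)) - tail (c j)"
proof -
  note w = band_in_window[OF n j]
  have n1: "1 \<le> n" and thr_x: "thr \<le> x n" using n by (auto simp: good_def)
  have thr_c: "thr \<le> c j"
    using thr_x w(1) monoD[OF mono_c, of "j - 1" j] by linarith
  have g: "0 < g (y n)" "g (y n) \<le> g (c j)" using g_y_pos[OF n] thr(2)[OF thr_c w(2)] by auto
  have "alpha * g (y n) / (8 * real (m n)) \<le> alpha * g (c j) / (8 * real (m n))"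
    using g alpha_pos m_ge[OF n1] by (intro divide_right_mono mult_left_mono) auto
  also have "\<dots> \<le> alpha * g (c j) / L (c j)"
    using L_mono[OF w(2)] L_y[OF n1] L_pos[of "c j"] alpha_pos g by (intro divide_left_mono) auto
  also have "\<dots> \<le> tail (c j * v) - tail (c j)" by (rule thr(3)[OF thr_c])
  finally show ?thesis using w(3) by (simp add: mult.commute)
qed

lemma below_band_power_ge:
  assumes n: "good n" and j: "j \<in> J n"
  shows "1 / 2 \<le> (1 - tail (c (j - 1))) ^ (m n - K)"
proof -
  have n1: "1 \<le> n" using n by (simp add: good_def)
  define mm where "mm = real (m n)"
  have mm2: "2 \<le> mm" using m_ge[OF n1] by (simp add: mm_def)
  have "tail (c (j - 1)) \<le> tail (x n)" using band_in_window(1)[OF n j] by (rule tail_antimono)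
  also have "tail (x n) = 1 / (2 * mm)" using L_x[OF n1] by (simp add: tail_eq_inverse_L mm_def)
  finally have p: "1 + (- 1 / (2 * mm)) \<le> 1 - tail (c (j - 1))" by simp
  have "1 / 2 = 1 + mm * (- 1 / (2 * mm))" using mm2 by simp
  also have "\<dots> \<le> (1 + (- 1 / (2 * mm))) ^ m n"
    unfolding mm_def by (rule Bernoulli_inequality) (use mm2 mm_def in simp)
  also have "\<dots> \<le> (1 - tail (c (j - 1))) ^ m n" using p mm2 by (intro power_mono) auto
  also have "\<dots> \<le> (1 - tail (c (j - 1))) ^ (m n - K)"
    using tail_le_1 tail_nonneg by (intro power_decreasing) auto
  finally show ?thesis .
qed

lemma finite_block: "finite (block n)" by (simp add: block_def)

lemma card_block: "card (block n) = m n" by (simp add: block_def m_def)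

lemma E_eq: "E n = (\<Union>j\<in>J n. band_event (block n) K (c (j - 1)) (c j))"
  unfolding E_def PE_def band_event_def by auto

lemma sets_E: "E n \<in> sets M"
  unfolding E_eq using sets_band_event[OF finite_block] by (auto simp: J_def)

lemma prob_band_event_ge:
  assumes n: "good n" and j: "j \<in> J n"
  shows "(real (m n) / real K) ^ K / 2 * (alpha * g (y n) / (8 * real (m n))) ^ (K - 1)
           * (tail (c (j - 1)) - tail (c j))
         \<le> prob (band_event (block n) K (c (j - 1)) (c j))"
proof -
  define ql where "ql = alpha * g (y n) / (8 * real (m n))"
  define q where "q = tail (c (j - 1)) - tail (c j)"
  have n1: "1 \<le> n" and Km: "K \<le> m n" using n by (auto simp: good_def)
  have q: "0 \<le> ql" "ql \<le> q"
    using alpha_pos g_y_pos[OF n] m_ge[OF n1] tail_band_ge[OF n j] by (auto simp: ql_def q_def)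
  have block_ne: "block n \<noteq> {}" using card_block[of n] m_ge[OF n1] by auto
  have prob_eq: "prob (band_event (block n) K (c (j - 1)) (c j)) = real (m n choose K) * q ^ K * (1 - tail (c (j - 1))) ^ (m n - K)"
    unfolding q_def card_block[symmetric]
    using band_in_window(3)[OF n j] c_pos[of j] v_less_1
    by (intro prob_band_event[OF finite_block block_ne]) (simp add: mult_left_le_one_le less_imp_le)
  have "(real (m n) / real K) ^ K / 2 * ql ^ (K - 1) * q = (real (m n) / real K) ^ K * (ql ^ (K - 1) * q) * (1 / 2)"
    by simp
  also have "\<dots> \<le> real (m n choose K) * q ^ K * (1 - tail (c (j - 1))) ^ (m n - K)"
  proof (intro mult_mono)
    show "(real (m n) / real K) ^ K \<le> real (m n choose K)" using Km by (rule binomial_ge_n_over_k_pow_k)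
    have "ql ^ (K - 1) * q \<le> q ^ (K - 1) * q" using q by (intro mult_right_mono power_mono) auto
    also have "\<dots> = q ^ K" using K_ge_1 by (simp add: power_eq_if)
    finally show "ql ^ (K - 1) * q \<le> q ^ K" .
  qed (use below_band_power_ge[OF n j] q in auto)
  finally show ?thesis unfolding prob_eq ql_def q_def .
qed

text \<open>The bands telescope to \<open>tail (c (a n)) - tail (c (b n))\<close>, and \<open>c (a n) < x n / v\<close>,
  \<open>v y n < c (b n)\<close> bound the two tails by \<open>1 / (4 m n)\<close> and \<open>1 / (6 m n)\<close>.\<close>
lemma sum_band_tails_ge:
  assumes n: "good n"
  shows "1 / (12 * real (m n)) \<le> (\<Sum>j\<in>J n. tail (c (j - 1)) - tail (c j))"
proof -
  have n1: "1 \<le> n" and x1: "1 \<le> x n" using n by (auto simp: good_def)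
  define mm where "mm = real (m n)"
  have mm2: "2 \<le> mm" using m_ge[OF n1] by (simp add: mm_def)
  have "(\<Sum>j\<in>J n. tail (c (j - 1)) - tail (c j)) = tail (c (a n)) - tail (c (b n))"
    using sum_telescope''[OF Suc_a_le_b[OF n, THEN Suc_leD], of "\<lambda>j. - tail (c j)"] by (simp add: J_def)
  moreover have "1 / (4 * mm) \<le> tail (c (a n))"
  proof -
    have "1 / v \<le> 1 / v ^ 2" using v_pos v_less_1 by (simp add: divide_le_eq power2_eq_square)
    then have "x n * (1 / v) \<le> x n * (1 / v ^ 2)" using x1 by (intro mult_left_mono) auto
    then have "c (a n) \<le> x n * (1 / v ^ 2)" using c_a_lt[OF x1] by simp
    then have "tail (x n * (1 / v ^ 2)) \<le> tail (c (a n))" by (rule tail_antimono)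
    moreover have "L (x n * (1 / v ^ 2)) \<le> 4 * mm" using n L_x[OF n1] by (simp add: good_def mm_def)
    then have "1 / (4 * mm) \<le> tail (x n * (1 / v ^ 2))"
      using L_pos mm2 by (simp add: tail_eq_inverse_L divide_left_mono)
    ultimately show ?thesis by simp
  qed
  moreover have "tail (c (b n)) \<le> 1 / (6 * mm)"
  proof -
    have "tail (c (b n)) \<le> tail (y n * v)" using c_b_gt[OF good_y_ge_1[OF n]] by (intro tail_antimono) (simp add: mult.commute)
    moreover have "6 * mm \<le> L (y n * v)" using n L_y[OF n1] by (simp add: good_def mm_def)
    then have "tail (y n * v) \<le> 1 / (6 * mm)" using mm2 by (simp add: tail_eq_inverse_L divide_left_mono)
    ultimately show ?thesis by simp
  qed
  moreover have "1 / (4 * mm) - 1 / (6 * mm) = 1 / (12 * mm)" using mm2 by (simp add: field_simps)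
  ultimately show ?thesis by (simp add: mm_def)
qed

lemma prob_E_ge:
  assumes n: "good n"
  shows "(alpha / 8) ^ (K - 1) / (24 * real K ^ K) * g (y n) ^ (K - 1) \<le> prob (E n)"
proof -
  define mm where "mm = real (m n)"
  define ql where "ql = alpha * g (y n) / (8 * mm)"
  define C where "C = (mm / real K) ^ K / 2 * ql ^ (K - 1)"
  have n1: "1 \<le> n" using n by (simp add: good_def)
  have mm2: "2 \<le> mm" using m_ge[OF n1] by (simp add: mm_def)
  have C: "0 \<le> C" using alpha_pos g_y_pos[OF n] mm2 by (simp add: C_def ql_def)
  have "(alpha / 8) ^ (K - 1) / (24 * real K ^ K) * g (y n) ^ (K - 1) = C * (1 / (12 * mm))"
  proof -
    obtain K' where K': "K = Suc K'" using K_ge_1 by (cases K) auto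
    show ?thesis unfolding C_def ql_def K' using mm2 by (simp add: power_divide power_mult_distrib field_simps)
  qed
  also have "\<dots> \<le> C * (\<Sum>j\<in>J n. tail (c (j - 1)) - tail (c j))"
    using sum_band_tails_ge[OF n] C by (intro mult_left_mono) (simp_all add: mm_def)
  also have "\<dots> \<le> (\<Sum>j\<in>J n. prob (band_event (block n) K (c (j - 1)) (c j)))"
    unfolding sum_distrib_left using prob_band_event_ge[OF n]
    by (intro sum_mono) (simp add: C_def ql_def mm_def mult.assoc)
  also have "\<dots> = prob (E n)"
    unfolding E_eq by (rule prob_UN_band_event[symmetric, OF finite_block K_ge_1 mono_c]) (simp add: J_def)
  finally show ?thesis .
qed

lemma eight_le_exp_3: "8 \<le> exp (3::real)"
proof -
  have "2 ^ 3 \<le> exp (1::real) ^ 3" using exp_ge_add_one_self[of 1] by (intro power_mono) auto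
  then show ?thesis by (simp add: exp_of_nat_mult[symmetric])
qed

definition Cexp :: nat where "Cexp = nat \<lceil>ln (real R)\<rceil> + 3"

lemma m_le_exp: assumes "1 \<le> n" shows "8 * real (m n) \<le> exp (real (Cexp * n))"
proof -
  have "8 * real (m n) \<le> exp 3 * real R ^ n"
    using eight_le_exp_3 by (intro mult_mono) (auto simp: m_def of_nat_diff simp del: of_nat_power
      simp: of_nat_power[symmetric])
  also have "\<dots> = exp (3 + real n * ln (real R))" using R_ge_3 by (simp add: exp_add exp_of_nat_mult)
  also have "\<dots> \<le> exp (real (Cexp * n))"
  proof -
    have "real n * ln (real R) \<le> real n * real (nat \<lceil>ln (real R)\<rceil>)"
      by (intro mult_left_mono real_nat_ceiling_ge) auto
    moreover have "real (Cexp * n) = 3 * real n + real n * real (nat \<lceil>ln (real R)\<rceil>)"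
      by (simp add: Cexp_def algebra_simps)
    moreover have "3 \<le> 3 * real n" using assms by simp
    ultimately show ?thesis by (simp only: exp_le_cancel_iff)
  qed
  finally show ?thesis .
qed

lemma prob_E_ge_eventually:
  "\<exists>C>0. \<forall>\<^sub>F n in sequentially.
     0 \<le> g (rc_inv L (exp (real (Cexp * n)))) \<and> C * g (rc_inv L (exp (real (Cexp * n)))) ^ (K - 1) \<le> prob (E n)"
proof -
  obtain Y where Y: "\<And>z z'. Y \<le> z \<Longrightarrow> z \<le> z' \<Longrightarrow> 0 \<le> g (rc_inv L z') \<and> g (rc_inv L z') \<le> g (rc_inv L z)"
    using g_rc_inv_eventually_antimono by blast
  define C where "C = (alpha / 8) ^ (K - 1) / (24 * real K ^ K)"
  have "0 < C" using alpha_pos K_ge_1 by (simp add: C_def)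
  moreover have "\<forall>\<^sub>F n in sequentially. Y \<le> real (m n)"
    using filterlim_m unfolding filterlim_at_top by blast
  then have "\<forall>\<^sub>F n in sequentially.
      0 \<le> g (rc_inv L (exp (real (Cexp * n)))) \<and> C * g (rc_inv L (exp (real (Cexp * n)))) ^ (K - 1) \<le> prob (E n)"
    using eventually_good
  proof eventually_elim
    case (elim n)
    then have n: "1 \<le> n" by (simp add: good_def)
    have Y_le: "Y \<le> 8 * real (m n)" using elim(1) by simp
    have g: "0 \<le> g (rc_inv L (exp (real (Cexp * n))))"
      "g (rc_inv L (exp (real (Cexp * n)))) \<le> g (y n)"
      unfolding y_def using Y[OF Y_le m_le_exp[OF n]] by auto
    then have "g (rc_inv L (exp (real (Cexp * n)))) ^ (K - 1) \<le> g (y n) ^ (K - 1)" by (intro power_mono)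
    then have "C * g (rc_inv L (exp (real (Cexp * n)))) ^ (K - 1) \<le> C * g (y n) ^ (K - 1)"
      using \<open>0 < C\<close> by simp
    also have "\<dots> \<le> prob (E n)" using prob_E_ge[OF elim(2)] by (simp add: C_def)
    finally show ?case using g(1) by simp
  qed
  ultimately show ?thesis by blast
qed

lemma not_summable_prob_E:
  assumes div: "\<not> summable (\<lambda>n::nat. g (rc_inv L (exp (real n))) ^ (K - 1))"
  shows "\<not> summable (\<lambda>n. prob (E n))"
proof
  assume summable: "summable (\<lambda>n. prob (E n))"
  obtain C where C: "0 < C" and ev: "\<forall>\<^sub>F n in sequentially.
      0 \<le> g (rc_inv L (exp (real (Cexp * n)))) \<and> C * g (rc_inv L (exp (real (Cexp * n)))) ^ (K - 1) \<le> prob (E n)"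
    using prob_E_ge_eventually by blast
  from ev have "\<forall>\<^sub>F n in sequentially. norm (C * g (rc_inv L (exp (real (Cexp * n)))) ^ (K - 1)) \<le> prob (E n)"
    by eventually_elim (use C in simp)
  then have "summable (\<lambda>n. C * g (rc_inv L (exp (real (Cexp * n)))) ^ (K - 1))"
    using summable by (rule summable_comparison_test_ev)
  then have "summable (\<lambda>n. g (rc_inv L (exp (real (Cexp * n)))) ^ (K - 1))" using C by simp
  then have "summable (\<lambda>n. g (rc_inv L (exp (real n))) ^ (K - 1))"
    by (rule summable_g_rc_inv_exp_of_mult_index[rotated]) (simp add: Cexp_def)
  then show False using div by simp
qed

lemma prob_not_G: assumes "1 \<le> n" shows "prob (space M - G n) \<le> 1 / (2 * (real R - 1))"
proof -
  have "space M - G n = {\<omega>\<in>space M. \<exists>i<R ^ (n - 1). x n < \<sigma> i \<omega>}" by (auto simp: G_def PG_def)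
  then have "prob (space M - G n) \<le> real (R ^ (n - 1)) * tail (x n)" by (simp only: prob_some_sigma_gt)
  also have "\<dots> = 1 / (2 * (real R - 1))"
    using L_x[OF assms] m_eq[OF assms] R_ge_3 by (simp add: tail_eq_inverse_L)
  finally show ?thesis .
qed

lemma sets_G: "G n \<in> sets M"
proof -
  have "G n = {\<omega>\<in>space M. \<forall>i\<in>{..<R ^ (n - 1)}. \<sigma> i \<omega> \<le> x n}" by (auto simp: G_def PG_def)
  also have "\<dots> \<in> sets M" using rv by measurable
  finally show ?thesis .
qed

lemma pred_PG: assumes "{..<R ^ (n - 1)} \<subseteq> A" shows "Measurable.pred (PiM A (\<lambda>_. borel)) (PG n)"
proof -
  have "PG n = (\<lambda>f. \<forall>i\<in>{..<R ^ (n - 1)}. f i \<le> x n)" by (auto simp: PG_def fun_eq_iff)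
  also have "Measurable.pred (PiM A (\<lambda>_. borel)) \<dots>"
    using assms by (intro pred_intros_finite(3)) auto
  finally show ?thesis .
qed

lemma pred_PE: assumes "block n \<subseteq> A" shows "Measurable.pred (PiM A (\<lambda>_. borel)) (PE n)"
  unfolding PE_def using pred_in_band_exactly[OF assms finite_block]
  by (intro pred_intros_finite(4)) (auto simp: J_def)

lemma PE_restrict: "block n \<subseteq> A \<Longrightarrow> PE n (\<lambda>i\<in>A. f i) = PE n f"
  unfolding PE_def using in_band_exactly_restrict by simp

lemma PG_restrict: "{..<R ^ (n - 1)} \<subseteq> A \<Longrightarrow> PG n (\<lambda>i\<in>A. f i) = PG n f"
  unfolding PG_def by auto

lemma block_subset: assumes "n \<le> N" shows "block n \<subseteq> {..<R ^ N}"
proof -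
  have "R ^ n \<le> R ^ N" using assms R_ge_3 by (intro power_increasing) auto
  then show ?thesis by (auto simp: block_def)
qed

lemma lessThan_pow_subset: assumes "n \<le> Suc N" shows "{..<R ^ (n - 1)} \<subseteq> {..<R ^ N}"
proof -
  have "R ^ (n - 1) \<le> R ^ N" using assms R_ge_3 by (intro power_increasing) auto
  then show ?thesis by auto
qed

definition no_success :: "nat \<Rightarrow> nat \<Rightarrow> 'a set" where
  "no_success n0 N = space M - (\<Union>n\<in>{n0..<N}. E n \<inter> G n)"

lemma sets_no_success: "no_success n0 N \<in> sets M"
  unfolding no_success_def using sets_E sets_G by auto

text \<open>\<open>no_success n0 N \<inter> G N\<close> depends only on the variables before block \<open>N\<close>, \<open>E N\<close> only on block \<open>N\<close>.\<close>
lemma prob_no_success_G_E: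
  assumes "1 \<le> N"
  shows "prob (no_success n0 N \<inter> G N \<inter> E N) = prob (no_success n0 N \<inter> G N) * prob (E N)"
proof -
  obtain N' where N': "N = Suc N'" using assms by (cases N) auto
  define A where "A = {..<R ^ N'}"
  define P where "P f \<longleftrightarrow> (\<forall>n\<in>{n0..<N}. \<not> (PE n f \<and> PG n f)) \<and> PG N f" for f
  have AB: "A \<inter> block N = {}" by (auto simp: A_def block_def N')
  have predP: "Measurable.pred (PiM A (\<lambda>_. borel)) P"
    unfolding P_def A_def using block_subset lessThan_pow_subset N'
    by (intro pred_intros_logic pred_intros_finite(3) pred_PE pred_PG) auto
  have locP: "P (\<lambda>i\<in>A. \<sigma> i \<omega>) = P (\<lambda>i. \<sigma> i \<omega>)" for \<omega>
    unfolding P_def A_def N' using block_subset lessThan_pow_subset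
    by (intro conj_cong ball_cong arg_cong[where f=Not] PE_restrict PG_restrict) auto
  have locE: "PE N (\<lambda>i\<in>block N. \<sigma> i \<omega>) = PE N (\<lambda>i. \<sigma> i \<omega>)" for \<omega> by (rule PE_restrict) simp
  have "no_success n0 N \<inter> G N \<inter> E N = {\<omega>\<in>space M. P (\<lambda>i\<in>A. \<sigma> i \<omega>) \<and> PE N (\<lambda>i\<in>block N. \<sigma> i \<omega>)}"
    "no_success n0 N \<inter> G N = {\<omega>\<in>space M. P (\<lambda>i\<in>A. \<sigma> i \<omega>)}"
    "E N = {\<omega>\<in>space M. PE N (\<lambda>i\<in>block N. \<sigma> i \<omega>)}"
    unfolding locP locE by (auto simp: no_success_def E_def G_def P_def)
  then show ?thesis using prob_indep_restrict[OF AB predP pred_PE[OF order.refl]] by simp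
qed

text \<open>With \<open>\<beta>\<close> bounding \<open>prob (space M - G N)\<close>, the excess of \<open>prob (no_success n0 N)\<close> over \<open>\<beta>\<close>
  shrinks by the factor \<open>1 - prob (E N)\<close> from block to block.\<close>
lemma prob_no_success_Suc:
  assumes "1 \<le> n0" "n0 \<le> N"
  defines "\<beta> \<equiv> 1 / (2 * (real R - 1))"
  shows "prob (no_success n0 (Suc N)) - \<beta> \<le> (1 - prob (E N)) * (prob (no_success n0 N) - \<beta>)"
proof -
  define z where "z = prob (no_success n0 N)"
  define w where "w = prob (no_success n0 N \<inter> G N)"
  define p where "p = prob (E N)"
  have "no_success n0 (Suc N) = no_success n0 N - (no_success n0 N \<inter> G N \<inter> E N)"
    using assms by (auto simp: no_success_def atLeastLessThanSuc)
  then have "prob (no_success n0 (Suc N)) = z - prob (no_success n0 N \<inter> G N \<inter> E N)"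
    unfolding z_def using sets_no_success sets_G sets_E by (auto intro: finite_measure_Diff)
  also have "\<dots> = z - w * p" unfolding w_def p_def using assms by (simp add: prob_no_success_G_E)
  finally have z': "prob (no_success n0 (Suc N)) = z - w * p" .
  have "z \<le> prob ((no_success n0 N \<inter> G N) \<union> (space M - G N))"
    unfolding z_def using sets_no_success sets_G
    by (intro finite_measure_mono) (auto simp: no_success_def)
  also have "\<dots> \<le> w + prob (space M - G N)" unfolding w_def
    using sets_no_success sets_G by (intro measure_Un_le) auto
  also have "prob (space M - G N) \<le> \<beta>" unfolding \<beta>_def using assms by (intro prob_not_G) simp
  finally have w: "z - \<beta> \<le> w" by simp
  have "p * (z - \<beta>) \<le> p * w" using w by (intro mult_left_mono) (simp_all add: p_def)
  then show ?thesis unfolding z' z_def[symmetric] p_def[symmetric] by (simp add: algebra_simps)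
qed

lemma prob_no_success_le:
  assumes "1 \<le> n0" "n0 \<le> N"
  shows "prob (no_success n0 N) \<le> 1 / (2 * (real R - 1)) + (\<Prod>n\<in>{n0..<N}. 1 - prob (E n))"
  using assms(2)
proof (induction N rule: dec_induct)
  case base
  then show ?case using R_ge_3 by (simp add: no_success_def prob_space)
next
  case (step N)
  have "prob (no_success n0 (Suc N)) - 1 / (2 * (real R - 1))
      \<le> (1 - prob (E N)) * (prob (no_success n0 N) - 1 / (2 * (real R - 1)))"
    using assms step by (intro prob_no_success_Suc) auto
  also have "\<dots> \<le> (1 - prob (E N)) * (\<Prod>n\<in>{n0..<N}. 1 - prob (E n))"
    using step.IH by (intro mult_left_mono) auto
  finally show ?case using step by (simp add: atLeastLessThanSuc algebra_simps)
qed

definition never_success :: "nat \<Rightarrow> 'a set" where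
  "never_success n0 = space M - (\<Union>n\<in>{n0..}. E n \<inter> G n)"

lemma sets_never_success: "never_success n0 \<in> sets M"
  unfolding never_success_def using sets_E sets_G by auto

text \<open>Since \<open>\<Sum> prob (E n)\<close> diverges, \<open>\<Prod>(1 - prob (E n)) \<le> exp (- \<Sum> prob (E n))\<close> becomes small.\<close>
lemma prob_never_success_le:
  assumes "1 \<le> n0" and div: "\<not> summable (\<lambda>n. prob (E n))"
  shows "prob (never_success n0) \<le> 1 / (2 * (real R - 1))"
proof (rule field_le_epsilon)
  fix \<eta> :: real assume \<eta>: "0 < \<eta>"
  define B where "B = (\<Sum>n<n0. prob (E n)) + \<bar>ln \<eta>\<bar>"
  obtain N where N: "B < (\<Sum>n<N. prob (E n))"
    using div summableI_nonneg_bounded[of "\<lambda>n. prob (E n)" B] by (force simp: not_less)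
  have "n0 \<le> N"
  proof (rule ccontr)
    assume "\<not> n0 \<le> N"
    then have "(\<Sum>n<N. prob (E n)) \<le> (\<Sum>n<n0. prob (E n))" by (intro sum_mono2) auto
    then show False using N by (simp add: B_def)
  qed
  then have "(\<Sum>n<N. prob (E n)) = (\<Sum>n<n0. prob (E n)) + (\<Sum>n\<in>{n0..<N}. prob (E n))"
    by (simp add: atLeast0LessThan[symmetric] sum.atLeastLessThan_concat)
  then have "- ln \<eta> < (\<Sum>n\<in>{n0..<N}. prob (E n))" using N by (simp add: B_def)
  then have "exp (- (\<Sum>n\<in>{n0..<N}. prob (E n))) < exp (ln \<eta>)" by simp
  then have small: "exp (- (\<Sum>n\<in>{n0..<N}. prob (E n))) < \<eta>" using \<eta> by simp
  have "prob (never_success n0) \<le> prob (no_success n0 N)"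
    using sets_no_success by (intro finite_measure_mono) (auto simp: never_success_def no_success_def)
  also have "\<dots> \<le> 1 / (2 * (real R - 1)) + (\<Prod>n\<in>{n0..<N}. 1 - prob (E n))"
    using assms \<open>n0 \<le> N\<close> by (intro prob_no_success_le)
  also have "(\<Prod>n\<in>{n0..<N}. 1 - prob (E n)) \<le> exp (- (\<Sum>n\<in>{n0..<N}. prob (E n)))"
    by (intro prod_one_minus_le_exp) simp
  finally show "prob (never_success n0) \<le> 1 / (2 * (real R - 1)) + \<eta>" using small by simp
qed

lemma ratio_gt_on_success:
  assumes \<omega>: "\<omega> \<in> E n \<inter> G n" and pos: "\<And>i. 0 < \<sigma> i \<omega>" and n: "1 \<le> n"
  shows "real K * v < (\<Sum>l\<le>R ^ n - 1. \<sigma> l \<omega>) / (MAX l\<in>{..R ^ n - 1}. \<sigma> l \<omega>)"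
proof -
  obtain j S where j: "j \<in> J n" and S: "S \<subseteq> block n" "card S = K"
    "\<forall>l\<in>S. c (j - 1) < \<sigma> l \<omega> \<and> \<sigma> l \<omega> \<le> c j" "\<forall>l\<in>block n - S. \<sigma> l \<omega> \<le> c (j - 1)"
    using \<omega> unfolding E_def PE_def in_band_exactly_def by blast
  have before: "\<sigma> l \<omega> \<le> x n" if "l < R ^ (n - 1)" for l using \<omega> that by (simp add: G_def PG_def)
  have x_le: "x n \<le> c (j - 1)" using x_le_band[OF n j] .
  have c_le: "c (j - 1) \<le> c j" by (rule monoD[OF mono_c]) simp
  have Rn: "0 < R ^ n" using R_ge_3 by simp
  have S_sub: "S \<subseteq> {..<R ^ n}" using S(1) by (auto simp: block_def)
  have S_ne: "S \<noteq> {}" using S(2) K_ge_1 by auto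
  have le_c: "\<sigma> l \<omega> \<le> c j" if "l < R ^ n" for l
  proof (cases "l < R ^ (n - 1)")
    case True then show ?thesis using before x_le c_le by force
  next
    case False
    then have "l \<in> block n" using that by (simp add: block_def)
    then show ?thesis using S(3,4) c_le by (cases "l \<in> S") force+
  qed
  define Mx where "Mx = (MAX l\<in>{..<R ^ n}. \<sigma> l \<omega>)"
  have "{..<R ^ n} \<noteq> {}" using Rn by (simp add: lessThan_empty_iff)
  then have "Mx \<le> c j" unfolding Mx_def using le_c by (subst Max_le_iff) auto
  then have "real K * v * Mx \<le> real K * v * c j" using v_pos by (intro mult_left_mono) auto
  also have "\<dots> = real K * c (j - 1)" using c_diff_1[of j] j by (simp add: J_def)
  also have "\<dots> = (\<Sum>l\<in>S. c (j - 1))" using S(2) by simp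
  also have "\<dots> < (\<Sum>l\<in>S. \<sigma> l \<omega>)"
    using S_ne S(3) finite_subset[OF S_sub] by (intro sum_strict_mono) auto
  also have "\<dots> \<le> (\<Sum>l<R ^ n. \<sigma> l \<omega>)" using S_sub pos by (intro sum_mono2) (auto intro: less_imp_le)
  finally have "real K * v * Mx < (\<Sum>l<R ^ n. \<sigma> l \<omega>)" .
  moreover obtain l0 where "l0 \<in> S" using S_ne by blast
  then have "\<sigma> l0 \<omega> \<le> Mx" unfolding Mx_def using S_sub by (intro Max_ge) auto
  then have "0 < Mx" using pos[of l0] by linarith
  moreover have I: "{..R ^ n - 1} = {..<R ^ n}" using Rn by (cases "R ^ n") (simp_all add: lessThan_Suc_atMost)
  ultimately show ?thesis unfolding I Mx_def[symmetric] by (simp add: pos_less_divide_eq)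
qed

end

context iid_slowly_varying begin

lemma small_cover_of_finitely_often:
  assumes K: "1 \<le> K" and v: "0 < v" "v < 1" and R: "3 \<le> R"
    and div: "\<not> summable (\<lambda>n::nat. g (rc_inv L (exp (real n))) ^ (K - 1))"
  shows "\<exists>W\<in>sets M. prob W \<le> 1 / (2 * (real R - 1)) \<and>
    (\<forall>\<omega>\<in>space M. \<not> ((\<forall>i. 0 < \<sigma> i \<omega>) \<longrightarrow> (\<exists>\<^sub>\<infinity> i. real K * v < (\<Sum>j\<le>i. \<sigma> j \<omega>) / (MAX j\<in>{..i}. \<sigma> j \<omega>))) \<longrightarrow> \<omega> \<in> W)"
proof -
  interpret blocks M \<sigma> g k K v R by unfold_locales (use K v R in auto)
  define W where "W = (\<Union>n0. never_success (Suc n0))"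
  have inc: "incseq (\<lambda>n0. never_success (Suc n0))" by (auto simp: incseq_def never_success_def)
  have "(\<lambda>n0. prob (never_success (Suc n0))) \<longlonglongrightarrow> prob W"
    unfolding W_def using sets_never_success inc by (intro finite_Lim_measure_incseq) auto
  then have "prob W \<le> 1 / (2 * (real R - 1))"
    using prob_never_success_le[OF _ not_summable_prob_E[OF div]] by (intro LIMSEQ_le_const2) auto
  moreover have "\<omega> \<in> W" if \<omega>: "\<omega> \<in> space M" "\<forall>i. 0 < \<sigma> i \<omega>"
    and fin: "\<not> (\<exists>\<^sub>\<infinity> i. real K * v < (\<Sum>j\<le>i. \<sigma> j \<omega>) / (MAX j\<in>{..i}. \<sigma> j \<omega>))" for \<omega>
  proof -
    obtain I0 where I0: "\<And>i. I0 < i \<Longrightarrow> \<not> real K * v < (\<Sum>j\<le>i. \<sigma> j \<omega>) / (MAX j\<in>{..i}. \<sigma> j \<omega>)"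
      using fin unfolding not_INFM MOST_nat by blast
    have "\<omega> \<notin> E n \<inter> G n" if n: "Suc I0 \<le> n" for n
    proof
      assume "\<omega> \<in> E n \<inter> G n"
      then have "real K * v < (\<Sum>j\<le>R ^ n - 1. \<sigma> j \<omega>) / (MAX j\<in>{..R ^ n - 1}. \<sigma> j \<omega>)"
        using \<omega>(2) n by (intro ratio_gt_on_success) auto
      moreover have "I0 < R ^ n - 1"
        using less_exp[of n] power_mono[of 2 R n] R n by linarith
      ultimately show False using I0 by blast
    qed
    then have "\<omega> \<in> never_success (Suc I0)" using \<omega>(1) by (auto simp: never_success_def)
    then show ?thesis by (auto simp: W_def)
  qed
  moreover have "W \<in> sets M" unfolding W_def using sets_never_success by auto
  ultimately show ?thesis by blast
qed

lemma AE_infinitely_often_ratio_gt: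
  assumes K: "1 \<le> K" and v: "0 < v" "v < 1"
    and div: "\<not> summable (\<lambda>n::nat. g (rc_inv L (exp (real n))) ^ (K - 1))"
  shows "AE \<omega> in M. \<exists>\<^sub>\<infinity> i. real K * v < (\<Sum>j\<le>i. \<sigma> j \<omega>) / (MAX j\<in>{..i}. \<sigma> j \<omega>)"
proof -
  have "AE \<omega> in M. (\<forall>i. 0 < \<sigma> i \<omega>) \<longrightarrow> (\<exists>\<^sub>\<infinity> i. real K * v < (\<Sum>j\<le>i. \<sigma> j \<omega>) / (MAX j\<in>{..i}. \<sigma> j \<omega>))"
  proof (rule AE_of_small_covers)
    fix e :: real assume e: "0 < e"
    define R where "R = nat \<lceil>1 / e\<rceil> + 3"
    have "1 / e \<le> real (nat \<lceil>1 / e\<rceil>)" by (rule real_nat_ceiling_ge)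
    then have le: "1 / e \<le> 2 * (real R - 1)" unfolding R_def by simp
    have "0 < 2 * (real R - 1)" by (simp add: R_def)
    then have "1 / (2 * (real R - 1)) \<le> 1 / (1 / e)"
      using e by (intro divide_left_mono[OF le]) simp_all
    then have "1 / (2 * (real R - 1)) \<le> e" by simp
    then show "\<exists>W\<in>sets M. prob W \<le> e \<and> (\<forall>\<omega>\<in>space M. \<not> ((\<forall>i. 0 < \<sigma> i \<omega>) \<longrightarrow>
        (\<exists>\<^sub>\<infinity> i. real K * v < (\<Sum>j\<le>i. \<sigma> j \<omega>) / (MAX j\<in>{..i}. \<sigma> j \<omega>))) \<longrightarrow> \<omega> \<in> W)"
      using small_cover_of_finitely_often[OF K v _ div, of R] by (force simp: R_def)
  qed
  then show ?thesis using AE_sigma_pos by eventually_elim blast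
qed

end

theorem proposition3p11:
  fixes M :: "'a measure" and \<sigma> :: "nat \<Rightarrow> 'a \<Rightarrow> real"
    and g k :: "real \<Rightarrow> real"
  assumes P: "prob_space M"
    and rv: "\<And>i. \<sigma> i \<in> borel_measurable M"
    and indep: "prob_space.indep_vars M (\<lambda>_. borel) \<sigma> UNIV"
    and ident: "\<And>i. distr M borel (\<sigma> i) = distr M borel (\<sigma> 0)"
    and pos: "AE x in M. 0 < \<sigma> 0 x"
    and slow: "\<And>v. 0 < v \<Longrightarrow> ((\<lambda>u. tailL M (\<sigma> 0) (u * v) / tailL M (\<sigma> 0) u) \<longlongrightarrow> 1) at_top"
    \<comment> \<open>Assumption A\<close>
    and Lcont: "continuous_on UNIV (tailL M (\<sigma> 0))"
    and g_lim: "(g \<longlongrightarrow> 0) at_top"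
    and g_dec: "\<exists>u0. \<forall>x y. u0 \<le> x \<longrightarrow> x \<le> y \<longrightarrow> g y \<le> g x"
    and k_lim: "\<And>v. 0 < v \<Longrightarrow>
       ((\<lambda>u. (tailL M (\<sigma> 0) (u * v) / tailL M (\<sigma> 0) u - 1) / g u) \<longlongrightarrow> k v) at_top"
    and k_nontriv: "\<exists>v>0. k v \<noteq> 0 \<and> (\<forall>u>0. k (u * v) \<noteq> k u)"
    \<comment> \<open>N finite, and divergence of sum d(e^n)^(N-2)\<close>
    and N_fin: "\<exists>l\<ge>2. summable (\<lambda>n::nat. (g (rc_inv (tailL M (\<sigma> 0)) (exp (real n))) * ln (real n)) ^ (l - 1))"
    and diverg: "\<not> summable (\<lambda>n::nat. (g (rc_inv (tailL M (\<sigma> 0)) (exp (real n)))) ^ (Nidx (\<lambda>y. g (rc_inv (tailL M (\<sigma> 0)) y)) - 2))"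
  shows "\<exists>\<epsilon>0>0. \<forall>\<epsilon>. 0 < \<epsilon> \<and> \<epsilon> < \<epsilon>0 \<longrightarrow>
           (AE x in M. \<exists>\<^sub>\<infinity> i. (\<Sum>j\<le>i. \<sigma> j x) / (MAX j\<in>{..i}. \<sigma> j x)
               > real (Nidx (\<lambda>y. g (rc_inv (tailL M (\<sigma> 0)) y))) - 1 - \<epsilon>)"
proof -
  interpret iid_slowly_varying M \<sigma> g k
    by (rule iid_slowly_varying.intro[OF P rv indep ident pos slow Lcont g_lim g_dec k_lim k_nontriv])
  define N where "N = Nidx (\<lambda>y. g (rc_inv L y))"
  have N2: "2 \<le> N" unfolding N_def using N_fin by (rule Nidx_ge_2)
  have "AE x in M. \<exists>\<^sub>\<infinity> i. (\<Sum>j\<le>i. \<sigma> j x) / (MAX j\<in>{..i}. \<sigma> j x) > real N - 1 - \<epsilon>"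
    if \<epsilon>: "0 < \<epsilon>" "\<epsilon> < 1" for \<epsilon>
  proof -
    define v where "v = 1 - \<epsilon> / real (N - 1)"
    have v: "0 < v" "v < 1" using \<epsilon> N2 by (auto simp: v_def field_simps)
    have "real (N - 1) * v = real N - 1 - \<epsilon>" using N2 by (simp add: v_def of_nat_diff field_simps)
    moreover have "N - 1 - 1 = N - 2" by simp
    ultimately show ?thesis
      using AE_infinitely_often_ratio_gt[of "N - 1" v] v N2 diverg by (simp add: N_def)
  qed
  then show ?thesis unfolding N_def by (intro exI[of _ 1]) auto
qed

end
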